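(* Let $v\in V\cap C^\infty(\overline D;\mathbb R^2)$. For each $s=L/N$ and $n=0,\dots,N-1$ let $v_n(\hat x)=v(\hat x,ns)$, and decompose $v_n=v_{n,1}+v_{n,2}$ with $v_{n,1}\in\mathscr F$, $v_{n,2}\in\mathscr G$. Set $v_1^s=\sum_{n=0}^{N-1}v_{n,1}\chi_n$ and $v_2^s=\sum_{n=0}^{N-1}v_{n,2}\chi_n$. Then there exist $v_1,v_2\in L^2(D;\mathbb R^2)$ such that $v_1+v_2=v$, $v_1^s\to v_1$ and $v_2^s\to v_2$ in $L^2(D;\mathbb R^2)$ as $s\to0$, and $$\langle v_1,v_2\rangle=\langle v_1^s,v_2\rangle=\langle v_1,v_2^s\rangle=0$$ for all $s$, where $\langle\cdot,\cdot\rangle$ is the inner product of $L^2(D;\mathbb R^2)$.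
   Context: Let $\Omega\subset\mathbb R^2$ be a bounded simply connected smooth domain, $L>0$, $D=\Omega\times(0,L)$, $s=L/N$ with $N$ a positive integer; $s\to0$ means $N\to\infty$. Points are $x=(\hat x,x_3)$. $\operatorname{curl}f=\partial_1f^2-\partial_2f^1$; $V:=\{v\in L^2(D;\mathbb R^2):\operatorname{curl}v\text{ is a finite Radon measure on }D\}$. $L^2(\Omega;\mathbb R^2)=\mathscr F\oplus\mathscr G$ (orthogonal direct sum), where $\mathscr F=\{(\partial_2f,-\partial_1f):f\in H^1(\Omega),\ f=0\text{ on }\partial\Omega\}$ and $\mathscr G=\{\hat\nabla g:g\in H^1(\Omega)\}$. $\chi_0=\chi_{(0,s)}(x_3)$ and $\chi_n=\chi_{[ns,(n+1)s)}(x_3)$ for $1\le n\le N-1$. *)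

theory Defs
  imports "HOL-Analysis.Analysis"
begin

text \<open>Points of R^2 are of type real^2; points of R^3 = R^2 x R are pairs (hat x, x3).\<close>

fun Ck_on :: "nat \<Rightarrow> 'a::euclidean_space set \<Rightarrow> ('a \<Rightarrow> 'b::real_normed_vector) \<Rightarrow> bool" where
  "Ck_on 0 S f = continuous_on S f"
| "Ck_on (Suc k) S f =
     (\<exists>f'. (\<forall>x\<in>S. (f has_derivative f' x) (at x)) \<and> (\<forall>i\<in>Basis. Ck_on k S (\<lambda>x. f' x i)))"

definition smooth_on :: "'a::euclidean_space set \<Rightarrow> ('a \<Rightarrow> 'b::real_normed_vector) \<Rightarrow> bool" where
  "smooth_on S f \<longleftrightarrow> open S \<and> (\<forall>k. Ck_on k S f)"

definition smooth_on_closure :: "'a::euclidean_space set \<Rightarrow> ('a \<Rightarrow> 'b::real_normed_vector) \<Rightarrow> bool" where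
  "smooth_on_closure S f \<longleftrightarrow>
     (\<exists>U w. open U \<and> closure S \<subseteq> U \<and> smooth_on U w \<and> (\<forall>x\<in>closure S. w x = f x))"

definition pder :: "('a::real_normed_vector \<Rightarrow> 'b::real_normed_vector) \<Rightarrow> 'a \<Rightarrow> 'a \<Rightarrow> 'b" where
  "pder f h x = frechet_derivative f (at x) h"

definition tsupport :: "('a::real_normed_vector \<Rightarrow> 'b::zero) \<Rightarrow> 'a set" where
  "tsupport f = closure {x. f x \<noteq> 0}"

definition test_fun :: "'a::euclidean_space set \<Rightarrow> ('a \<Rightarrow> real) \<Rightarrow> bool" where
  "test_fun U \<phi> \<longleftrightarrow> smooth_on UNIV \<phi> \<and> compact (tsupport \<phi>) \<and> tsupport \<phi> \<subseteq> U"

definition smooth_bounded_domain :: "(real^2) set \<Rightarrow> bool" where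
  "smooth_bounded_domain \<Omega> \<longleftrightarrow> open \<Omega> \<and> connected \<Omega> \<and> \<Omega> \<noteq> {} \<and> bounded \<Omega> \<and>
     (\<forall>p\<in>frontier \<Omega>. \<exists>r>0. \<exists>\<psi>::real^2 \<Rightarrow> real. smooth_on UNIV \<psi> \<and>
        (\<forall>x\<in>ball p r. frechet_derivative \<psi> (at x) \<noteq> (\<lambda>h. 0)) \<and>
        \<Omega> \<inter> ball p r = {x\<in>ball p r. \<psi> x < 0})"

definition cyl :: "(real^2) set \<Rightarrow> real \<Rightarrow> ((real^2) \<times> real) set" where
  "cyl \<Omega> L = \<Omega> \<times> {0<..<L}"

definition L2 :: "'a::euclidean_space set \<Rightarrow> ('a \<Rightarrow> 'b::euclidean_space) \<Rightarrow> bool" where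
  "L2 S f \<longleftrightarrow> set_borel_measurable lborel S f \<and> set_integrable lborel S (\<lambda>x. (norm (f x))\<^sup>2)"

definition L2_inner :: "'a::euclidean_space set \<Rightarrow> ('a \<Rightarrow> 'b::euclidean_space) \<Rightarrow> ('a \<Rightarrow> 'b) \<Rightarrow> real" where
  "L2_inner S f g = (LINT x:S|lborel. f x \<bullet> g x)"

definition L2_dist_sq :: "'a::euclidean_space set \<Rightarrow> ('a \<Rightarrow> 'b::euclidean_space) \<Rightarrow> ('a \<Rightarrow> 'b) \<Rightarrow> real" where
  "L2_dist_sq S f g = (LINT x:S|lborel. (norm (f x - g x))\<^sup>2)"

text \<open>Distributional curl (in the hat x variables) of v on D is a finite (signed) Radon
  measure: difference of two finite Borel measures concentrated on D.\<close>
definition curl_finite_radon :: "((real^2) \<times> real) set \<Rightarrow> ((real^2) \<times> real \<Rightarrow> real^2) \<Rightarrow> bool" where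
  "curl_finite_radon D v \<longleftrightarrow>
     (\<exists>\<mu> \<nu> :: ((real^2) \<times> real) measure.
        sets \<mu> = sets borel \<and> sets \<nu> = sets borel \<and> finite_measure \<mu> \<and> finite_measure \<nu> \<and>
        emeasure \<mu> (UNIV - D) = 0 \<and> emeasure \<nu> (UNIV - D) = 0 \<and>
        (\<forall>\<phi>. test_fun D \<phi> \<longrightarrow>
           (LINT x:D|lborel. v x $ 1 * pder \<phi> (axis 2 1, 0) x - v x $ 2 * pder \<phi> (axis 1 1, 0) x)
           = (\<integral>x. \<phi> x \<partial>\<mu>) - (\<integral>x. \<phi> x \<partial>\<nu>)))"

definition Vspace :: "((real^2) \<times> real) set \<Rightarrow> ((real^2) \<times> real \<Rightarrow> real^2) set" where
  "Vspace D = {v. L2 D v \<and> curl_finite_radon D v}"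

definition grad :: "(real^2 \<Rightarrow> real) \<Rightarrow> real^2 \<Rightarrow> real^2" where
  "grad \<phi> x = (\<chi> i. pder \<phi> (axis i 1) x)"

definition weak_grad :: "(real^2) set \<Rightarrow> (real^2 \<Rightarrow> real) \<Rightarrow> (real^2 \<Rightarrow> real^2) \<Rightarrow> bool" where
  "weak_grad \<Omega> g w \<longleftrightarrow> L2 \<Omega> g \<and> L2 \<Omega> w \<and>
     (\<forall>\<phi>. test_fun \<Omega> \<phi> \<longrightarrow> (\<forall>i. (LINT x:\<Omega>|lborel. g x * pder \<phi> (axis i 1) x)
                                     = - (LINT x:\<Omega>|lborel. w x $ i * \<phi> x)))"

definition H10 :: "(real^2) set \<Rightarrow> (real^2 \<Rightarrow> real) \<Rightarrow> (real^2 \<Rightarrow> real^2) \<Rightarrow> bool" where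
  "H10 \<Omega> f w \<longleftrightarrow> weak_grad \<Omega> f w \<and>
     (\<exists>\<phi>s. (\<forall>k. test_fun \<Omega> (\<phi>s k)) \<and>
        (\<lambda>k. L2_dist_sq \<Omega> (\<phi>s k) f + L2_dist_sq \<Omega> (grad (\<phi>s k)) w) \<longlonglongrightarrow> 0)"

definition rot_perp :: "real^2 \<Rightarrow> real^2" where
  "rot_perp w = (\<chi> i. if i = 1 then w $ 2 else - (w $ 1))"

definition Fspace :: "(real^2) set \<Rightarrow> (real^2 \<Rightarrow> real^2) set" where
  "Fspace \<Omega> = {u. L2 \<Omega> u \<and> (\<exists>f w. H10 \<Omega> f w \<and> (AE x in lborel. x \<in> \<Omega> \<longrightarrow> u x = rot_perp (w x)))}"

definition Gspace :: "(real^2) set \<Rightarrow> (real^2 \<Rightarrow> real^2) set" where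
  "Gspace \<Omega> = {u. L2 \<Omega> u \<and> (\<exists>g. weak_grad \<Omega> g u)}"

definition layer_chi :: "real \<Rightarrow> nat \<Rightarrow> nat \<Rightarrow> real \<Rightarrow> real" where
  "layer_chi L N n t = (let s = L / real N in
      if n = 0 then indicator {0<..<s} t else indicator {real n * s..<(real n + 1) * s} t)"

definition step_fun :: "real \<Rightarrow> nat \<Rightarrow> (nat \<Rightarrow> real^2 \<Rightarrow> real^2) \<Rightarrow> (real^2) \<times> real \<Rightarrow> real^2" where
  "step_fun L N u x = (\<Sum>n<N. layer_chi L N n (snd x) *\<^sub>R u n (fst x))"

end

theory Submission
  imports Defs
begin

text \<open>The limit decomposition is built slice by slice. The spaces \<open>F\<close> and \<open>G\<close> are orthogonal in
  \<open>L\<^sup>2(\<Omega>)\<close> (integration by parts against test functions), so on any grids the \<open>F\<close>-parts of two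
  slices are at most as far apart as the slices themselves. As \<open>t \<mapsto> v(\<cdot>, t)\<close> is uniformly
  continuous into \<open>L\<^sup>2(\<Omega>)\<close>, along a suitable sequence of grids the \<open>F\<close>-parts of every slice
  form a fast Cauchy sequence; its a.e. limit defines \<open>v\<^sub>1\<close>, and \<open>v\<^sub>2 = v - v\<^sub>1\<close>. Every
  slice of \<open>v\<^sub>1\<close> is then an \<open>L\<^sup>2\<close>-limit of \<open>F\<close>-parts and every slice of \<open>v\<^sub>2\<close> one of
  \<open>G\<close>-parts, which gives the orthogonality relations slice by slice, and Fubini turns
  convergence that is uniform in the slice into convergence in \<open>L\<^sup>2(D)\<close>.\<close>

section \<open>Symmetry of mixed partial derivatives\<close>

lemma second_difference_mean_value:
  fixes \<phi> :: "'a::real_normed_vector \<Rightarrow> real"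
  assumes D: "\<And>x. (\<phi> has_derivative D x) (at x)"
    and E: "\<And>x. ((\<lambda>y. D y u) has_derivative E x) (at x)"
    and h: "h > 0"
  shows "\<exists>p. norm (p - x) \<le> h * (norm u + norm w) \<and>
     \<phi> (x + h *\<^sub>R u + h *\<^sub>R w) - \<phi> (x + h *\<^sub>R u) - \<phi> (x + h *\<^sub>R w) + \<phi> x = h * h * E p w"
proof -
  define g where "g t = \<phi> (x + t *\<^sub>R u + h *\<^sub>R w) - \<phi> (x + t *\<^sub>R u)" for t
  have lin: "linear (D y)" for y using D has_derivative_linear by blast
  have "(g has_derivative (\<lambda>d. d * (D (x + t *\<^sub>R u + h *\<^sub>R w) u - D (x + t *\<^sub>R u) u)))
      (at t within {0..h})" for t
  proof -
    have l1: "((\<lambda>t. x + t *\<^sub>R u + h *\<^sub>R w) has_derivative (\<lambda>d. d *\<^sub>R u)) (at t within {0..h})"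
      and l2: "((\<lambda>t. x + t *\<^sub>R u) has_derivative (\<lambda>d. d *\<^sub>R u)) (at t within {0..h})"
      by (auto intro!: derivative_eq_intros)
    have "(g has_derivative (\<lambda>d. D (x + t *\<^sub>R u + h *\<^sub>R w) (d *\<^sub>R u) - D (x + t *\<^sub>R u) (d *\<^sub>R u)))
        (at t within {0..h})"
      unfolding g_def using has_derivative_in_compose[OF l1 has_derivative_at_withinI[OF D]]
        has_derivative_in_compose[OF l2 has_derivative_at_withinI[OF D]]
      by (intro has_derivative_diff) (simp_all add: o_def)
    thus ?thesis by (simp add: linear_scale[OF lin] algebra_simps)
  qed
  then obtain \<xi> where \<xi>: "\<xi> \<in> {0..h}"
    and g: "g h - g 0 = h * (D (x + \<xi> *\<^sub>R u + h *\<^sub>R w) u - D (x + \<xi> *\<^sub>R u) u)"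
    using mvt_very_simple[of 0 h g] h by force
  define k where "k s = D (x + \<xi> *\<^sub>R u + s *\<^sub>R w) u" for s
  have "(k has_derivative (\<lambda>d. d * E (x + \<xi> *\<^sub>R u + s *\<^sub>R w) w)) (at s within {0..h})" for s
  proof -
    have l: "((\<lambda>s. x + \<xi> *\<^sub>R u + s *\<^sub>R w) has_derivative (\<lambda>d. d *\<^sub>R w)) (at s within {0..h})"
      by (auto intro!: derivative_eq_intros)
    have "(k has_derivative (\<lambda>d. E (x + \<xi> *\<^sub>R u + s *\<^sub>R w) (d *\<^sub>R w))) (at s within {0..h})"
      unfolding k_def using has_derivative_in_compose[OF l has_derivative_at_withinI[OF E]]
      by (simp add: o_def)
    thus ?thesis by (simp add: linear_scale[OF has_derivative_linear[OF E]])
  qed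
  then obtain \<eta> where \<eta>: "\<eta> \<in> {0..h}" and k: "k h - k 0 = h * E (x + \<xi> *\<^sub>R u + \<eta> *\<^sub>R w) w"
    using mvt_very_simple[of 0 h k] h by force
  define p where "p = x + \<xi> *\<^sub>R u + \<eta> *\<^sub>R w"
  have "norm (p - x) \<le> norm (\<xi> *\<^sub>R u) + norm (\<eta> *\<^sub>R w)"
    unfolding p_def using norm_triangle_ineq[of "\<xi> *\<^sub>R u" "\<eta> *\<^sub>R w"] by (simp add: algebra_simps)
  also have "\<dots> \<le> h * norm u + h * norm w"
    using \<xi> \<eta> by (intro add_mono) (auto intro!: mult_right_mono)
  finally have "norm (p - x) \<le> h * (norm u + norm w)" by (simp add: algebra_simps)
  moreover have "\<phi> (x + h *\<^sub>R u + h *\<^sub>R w) - \<phi> (x + h *\<^sub>R u) - \<phi> (x + h *\<^sub>R w) + \<phi> x = h * h * E p w"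
    using g k by (simp add: g_def k_def p_def)
  ultimately show ?thesis by blast
qed

text \<open>Both mixed partials are limits of the same second difference quotient.\<close>

lemma mixed_partials_commute:
  fixes \<phi> :: "'a::real_normed_vector \<Rightarrow> real"
  assumes D: "\<And>x. (\<phi> has_derivative D x) (at x)"
    and Eu: "\<And>x. ((\<lambda>y. D y u) has_derivative Eu x) (at x)"
    and Ew: "\<And>x. ((\<lambda>y. D y w) has_derivative Ew x) (at x)"
    and cu: "continuous_on UNIV (\<lambda>x. Eu x w)" and cw: "continuous_on UNIV (\<lambda>x. Ew x u)"
  shows "Eu x w = Ew x u"
proof (rule ccontr)
  assume ne: "Eu x w \<noteq> Ew x u"
  define e where "e = \<bar>Eu x w - Ew x u\<bar> / 2"
  have e: "e > 0" using ne by (simp add: e_def)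
  obtain d1 where d1: "d1 > 0" "\<And>y. dist y x < d1 \<Longrightarrow> dist (Eu y w) (Eu x w) < e"
    using cu e unfolding continuous_on_iff by (metis UNIV_I)
  obtain d2 where d2: "d2 > 0" "\<And>y. dist y x < d2 \<Longrightarrow> dist (Ew y u) (Ew x u) < e"
    using cw e unfolding continuous_on_iff by (metis UNIV_I)
  define h where "h = min d1 d2 / (2 * (norm u + norm w + 1))"
  have pos: "norm u + norm w + 1 > 0" by (smt (verit) norm_ge_zero)
  hence h: "h > 0" using d1 d2 unfolding h_def by (intro divide_pos_pos) auto
  have "h * (norm u + norm w) < h * (norm u + norm w + 1)" using h by simp
  also have "\<dots> = min d1 d2 / 2" unfolding h_def using pos by (simp add: field_simps)
  finally have hd: "h * (norm u + norm w) < min d1 d2" using d1 d2 by linarith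
  obtain p where p: "norm (p - x) \<le> h * (norm u + norm w)"
    "\<phi> (x + h *\<^sub>R u + h *\<^sub>R w) - \<phi> (x + h *\<^sub>R u) - \<phi> (x + h *\<^sub>R w) + \<phi> x = h * h * Eu p w"
    using second_difference_mean_value[OF D Eu h] by blast
  obtain q where q: "norm (q - x) \<le> h * (norm w + norm u)"
    "\<phi> (x + h *\<^sub>R w + h *\<^sub>R u) - \<phi> (x + h *\<^sub>R w) - \<phi> (x + h *\<^sub>R u) + \<phi> x = h * h * Ew q u"
    using second_difference_mean_value[OF D Ew h] by blast
  have "Eu p w = Ew q u" using p(2) q(2) h by (simp add: algebra_simps)
  moreover have "\<bar>Eu p w - Eu x w\<bar> < e"
    using d1(2)[of p] p(1) hd by (simp add: dist_norm dist_real_def)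
  moreover have "\<bar>Ew q u - Ew x u\<bar> < e"
    using d2(2)[of q] q(1) hd by (simp add: dist_norm dist_real_def add.commute)
  ultimately have "\<bar>Eu x w - Ew x u\<bar> < e + e" by (simp add: abs_diff_less_iff)
  thus False unfolding e_def by simp
qed

lemma test_fun_has_derivative:
  assumes "test_fun U \<phi>"
  shows "(\<phi> has_derivative (\<lambda>h. pder \<phi> h x)) (at x)"
proof -
  have "Ck_on (Suc 0) UNIV \<phi>" using assms unfolding test_fun_def smooth_on_def by blast
  then obtain f' where f': "\<And>x. (\<phi> has_derivative f' x) (at x)" by auto
  have "(\<lambda>h. pder \<phi> h x) = f' x" unfolding pder_def using frechet_derivative_at[OF f'] by simp
  thus ?thesis using f' by simp
qed

lemma test_fun_continuous: "test_fun U \<phi> \<Longrightarrow> continuous_on UNIV \<phi>"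
  unfolding test_fun_def smooth_on_def using Ck_on.simps(1) by blast

lemma eq_0_outside_tsupport: "x \<notin> tsupport \<phi> \<Longrightarrow> \<phi> x = 0"
  unfolding tsupport_def using closure_subset[of "{x. \<phi> x \<noteq> 0}"] by auto

lemma test_fun_bounded:
  assumes "test_fun U \<phi>"
  obtains B where "\<And>x. \<bar>\<phi> x\<bar> \<le> B"
proof -
  have "compact (tsupport \<phi>)" using assms by (simp add: test_fun_def)
  hence "compact (\<phi> ` tsupport \<phi>)"
    by (rule compact_continuous_image[OF continuous_on_subset[OF test_fun_continuous[OF assms]], rotated])
      simp
  hence "bounded (\<phi> ` tsupport \<phi>)" by (rule compact_imp_bounded)
  then obtain B where B: "\<And>y. y \<in> \<phi> ` tsupport \<phi> \<Longrightarrow> norm y \<le> B"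
    unfolding bounded_iff by auto
  have "\<bar>\<phi> x\<bar> \<le> max B 0" for x
  proof (cases "x \<in> tsupport \<phi>")
    case True thus ?thesis using B[of "\<phi> x"] by simp
  qed (simp add: eq_0_outside_tsupport)
  thus thesis by (rule that)
qed

lemma pder_eq_0_outside_tsupport:
  assumes "test_fun U \<phi>" "x \<notin> tsupport \<phi>"
  shows "pder \<phi> h x = 0"
proof -
  have "open (- tsupport \<phi>)" unfolding tsupport_def by (simp add: open_Compl)
  moreover have "((\<lambda>_. 0) has_derivative (\<lambda>h. 0)) (at x)" by simp
  ultimately have "(\<phi> has_derivative (\<lambda>h. 0)) (at x)"
    using has_derivative_transform_within_open[of "\<lambda>_. 0" "\<lambda>h. 0" x UNIV "- tsupport \<phi>" \<phi>]
      assms(2) eq_0_outside_tsupport by fastforce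
  with test_fun_has_derivative[OF assms(1)] have "(\<lambda>h. pder \<phi> h x) = (\<lambda>h. 0)"
    by (rule has_derivative_unique)
  thus ?thesis by (rule fun_cong)
qed

lemma test_fun_pder:
  assumes t: "test_fun U \<phi>" and hB: "h \<in> Basis"
  shows "test_fun U (pder \<phi> h)"
proof -
  have "Ck_on k UNIV (pder \<phi> h)" for k
  proof -
    obtain f' where f': "\<And>x. (\<phi> has_derivative f' x) (at x)"
      and ck: "\<And>i. i \<in> Basis \<Longrightarrow> Ck_on k UNIV (\<lambda>x. f' x i)"
      using t unfolding test_fun_def smooth_on_def by (metis Ck_on.simps(2) iso_tuple_UNIV_I)
    have "pder \<phi> h = (\<lambda>x. f' x h)"
      unfolding pder_def by (simp add: frechet_derivative_at[OF f', symmetric])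
    thus ?thesis using ck[OF hB] by simp
  qed
  moreover have sub: "tsupport (pder \<phi> h) \<subseteq> tsupport \<phi>"
    unfolding tsupport_def[of "pder \<phi> h"]
    by (rule closure_minimal) (use pder_eq_0_outside_tsupport[OF t] in \<open>auto simp: tsupport_def\<close>)
  moreover have "compact (tsupport (pder \<phi> h))"
  proof -
    have "compact (tsupport \<phi> \<inter> tsupport (pder \<phi> h))"
      using t by (intro compact_Int_closed) (simp_all add: test_fun_def tsupport_def)
    thus ?thesis using sub by (simp add: Int_absorb1)
  qed
  ultimately show ?thesis using t unfolding test_fun_def smooth_on_def by auto
qed

lemma test_fun_pder_commute:
  fixes \<phi> :: "'a::euclidean_space \<Rightarrow> real"
  assumes t: "test_fun U \<phi>" and u: "u \<in> Basis" and w: "w \<in> Basis"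
  shows "pder (pder \<phi> u) w x = pder (pder \<phi> w) u x"
proof -
  have tu: "test_fun U (pder \<phi> u)" and tw: "test_fun U (pder \<phi> w)"
    using test_fun_pder t u w by blast+
  show ?thesis
    by (rule mixed_partials_commute[OF test_fun_has_derivative[OF t]
          test_fun_has_derivative[OF tu] test_fun_has_derivative[OF tw]
          test_fun_continuous[OF test_fun_pder[OF tu w]] test_fun_continuous[OF test_fun_pder[OF tw u]]])
qed

section \<open>Square-integrable functions\<close>

definition square_integrable :: "'a measure \<Rightarrow> ('a \<Rightarrow> 'b::euclidean_space) \<Rightarrow> bool" where
  "square_integrable M f \<longleftrightarrow> f \<in> borel_measurable M \<and> integrable M (\<lambda>x. (norm (f x))\<^sup>2)"

definition L2_sqnorm :: "'a measure \<Rightarrow> ('a \<Rightarrow> 'b::euclidean_space) \<Rightarrow> real" where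
  "L2_sqnorm M f = (\<integral>x. (norm (f x))\<^sup>2 \<partial>M)"

definition L2_ip :: "'a measure \<Rightarrow> ('a \<Rightarrow> 'b::euclidean_space) \<Rightarrow> ('a \<Rightarrow> 'b) \<Rightarrow> real" where
  "L2_ip M f g = (\<integral>x. f x \<bullet> g x \<partial>M)"

lemma square_integrable_measurable: "square_integrable M f \<Longrightarrow> f \<in> borel_measurable M"
  by (simp add: square_integrable_def)

lemma square_integrable_integrable: "square_integrable M f \<Longrightarrow> integrable M (\<lambda>x. (norm (f x))\<^sup>2)"
  by (simp add: square_integrable_def)

lemma abs_inner_le_half_sum_squares: "\<bar>(x::'b::real_inner) \<bullet> y\<bar> \<le> ((norm x)\<^sup>2 + (norm y)\<^sup>2) / 2"
  using Cauchy_Schwarz_ineq2[of x y] sum_squares_bound[of "norm x" "norm y"]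
  by (simp add: power2_eq_square)

lemma square_integrable_inner_integrable:
  assumes "square_integrable M f" "square_integrable M g"
  shows "integrable M (\<lambda>x. f x \<bullet> g x)"
proof (rule Bochner_Integration.integrable_bound)
  show "integrable M (\<lambda>x. ((norm (f x))\<^sup>2 + (norm (g x))\<^sup>2) / 2)"
    using assms by (intro integrable_divide Bochner_Integration.integrable_add)
      (simp_all add: square_integrable_def)
  show "AE x in M. norm (f x \<bullet> g x) \<le> norm (((norm (f x))\<^sup>2 + (norm (g x))\<^sup>2) / 2)"
    using abs_inner_le_half_sum_squares by (intro AE_I2) simp
qed (use assms in \<open>simp add: square_integrable_def borel_measurable_inner\<close>)

lemma norm_add_squared:
  "(norm (a + b))\<^sup>2 = (norm a)\<^sup>2 + (norm b)\<^sup>2 + 2 * (a \<bullet> b)" for a b :: "'b::real_inner"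
  by (simp add: power2_norm_eq_inner algebra_simps inner_commute)

lemma square_integrable_add:
  assumes "square_integrable M f" "square_integrable M g"
  shows "square_integrable M (\<lambda>x. f x + g x)"
proof -
  have "integrable M (\<lambda>x. (norm (f x))\<^sup>2 + (norm (g x))\<^sup>2 + 2 * (f x \<bullet> g x))"
    using assms square_integrable_inner_integrable[OF assms]
    by (intro Bochner_Integration.integrable_add integrable_mult_right)
      (simp_all add: square_integrable_def)
  thus ?thesis using assms
    by (simp add: square_integrable_def norm_add_squared borel_measurable_add)
qed

lemma square_integrable_scaleR:
  "square_integrable M f \<Longrightarrow> square_integrable M (\<lambda>x. c *\<^sub>R f x)"
  by (simp add: square_integrable_def power_mult_distrib borel_measurable_scaleR)

lemma square_integrable_diff:
  assumes "square_integrable M f" "square_integrable M g"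
  shows "square_integrable M (\<lambda>x. f x - g x)"
  using square_integrable_add[OF assms(1) square_integrable_scaleR[OF assms(2), of "-1"]] by simp

lemma L2_sqnorm_nonneg: "L2_sqnorm M f \<ge> 0"
  unfolding L2_sqnorm_def by (rule integral_nonneg_AE) simp

lemma L2_sqnorm_diff_commute: "L2_sqnorm M (\<lambda>x. f x - g x) = L2_sqnorm M (\<lambda>x. g x - f x)"
  unfolding L2_sqnorm_def by (simp add: norm_minus_commute)

lemma L2_sqnorm_eq_L2_ip: "L2_sqnorm M f = L2_ip M f f"
  unfolding L2_sqnorm_def L2_ip_def by (simp add: power2_norm_eq_inner)

lemma L2_ip_commute: "L2_ip M f g = L2_ip M g f"
  unfolding L2_ip_def by (simp add: inner_commute)

lemma L2_ip_diff_left: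
  assumes "square_integrable M f" "square_integrable M g" "square_integrable M h"
  shows "L2_ip M (\<lambda>x. f x - g x) h = L2_ip M f h - L2_ip M g h"
  unfolding L2_ip_def inner_diff_left
  using square_integrable_inner_integrable assms by (intro Bochner_Integration.integral_diff) auto

lemma L2_ip_diff_right:
  assumes "square_integrable M f" "square_integrable M g" "square_integrable M h"
  shows "L2_ip M h (\<lambda>x. f x - g x) = L2_ip M h f - L2_ip M h g"
  using L2_ip_diff_left[OF assms] by (simp add: L2_ip_commute)

lemma L2_sqnorm_add:
  assumes "square_integrable M f" "square_integrable M g"
  shows "L2_sqnorm M (\<lambda>x. f x + g x) = L2_sqnorm M f + L2_sqnorm M g + 2 * L2_ip M f g"
  using assms square_integrable_inner_integrable[OF assms]
  unfolding L2_sqnorm_def L2_ip_def norm_add_squared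
  by (simp add: square_integrable_def Bochner_Integration.integrable_add)

lemma L2_sqnorm_add_le:
  assumes "square_integrable M f" "square_integrable M g"
  shows "L2_sqnorm M (\<lambda>x. f x + g x) \<le> 2 * L2_sqnorm M f + 2 * L2_sqnorm M g"
proof -
  have "L2_sqnorm M (\<lambda>x. f x + g x) + L2_sqnorm M (\<lambda>x. f x - g x) = 2 * L2_sqnorm M f + 2 * L2_sqnorm M g"
    using L2_sqnorm_add[OF assms] L2_sqnorm_add[OF assms(1) square_integrable_scaleR[OF assms(2), of "-1"]]
    by (simp add: L2_ip_def L2_sqnorm_def)
  thus ?thesis using L2_sqnorm_nonneg[of M "\<lambda>x. f x - g x"] by linarith
qed

lemma L2_sqnorm_diff_le:
  assumes "square_integrable M f" "square_integrable M g"
  shows "L2_sqnorm M (\<lambda>x. f x - g x) \<le> 2 * L2_sqnorm M f + 2 * L2_sqnorm M g"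
  using L2_sqnorm_add_le[OF assms(1) square_integrable_scaleR[OF assms(2), of "-1"]]
  by (simp add: L2_sqnorm_def)

lemma L2_sqnorm_cong_AE:
  assumes "f \<in> borel_measurable M" "g \<in> borel_measurable M" "AE x in M. f x = g x"
  shows "L2_sqnorm M f = L2_sqnorm M g"
  unfolding L2_sqnorm_def using assms by (intro integral_cong_AE) (auto elim: AE_mp)

lemma L2_sqnorm_orthogonal_sum:
  assumes a: "square_integrable M a" and b: "square_integrable M b"
    and s: "s \<in> borel_measurable M" and sum: "AE x in M. a x + b x = s x"
    and orth: "L2_ip M a b = 0"
  shows "L2_sqnorm M s = L2_sqnorm M a + L2_sqnorm M b"
proof -
  have "L2_sqnorm M (\<lambda>x. a x + b x) = L2_sqnorm M s"
    by (rule L2_sqnorm_cong_AE[OF square_integrable_measurable[OF square_integrable_add[OF a b]] s sum])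
  thus ?thesis using L2_sqnorm_add[OF a b] orth by simp
qed

lemma L2_ip_abs_le:
  assumes "square_integrable M f" "square_integrable M g" "c > 0"
  shows "\<bar>L2_ip M f g\<bar> \<le> (c * L2_sqnorm M f + L2_sqnorm M g / c) / 2"
proof -
  let ?f = "\<lambda>x. sqrt c *\<^sub>R f x" and ?g = "\<lambda>x. (1 / sqrt c) *\<^sub>R g x"
  have "\<bar>L2_ip M f g\<bar> = \<bar>\<integral>x. ?f x \<bullet> ?g x \<partial>M\<bar>"
    unfolding L2_ip_def using assms(3) by simp
  also have "\<dots> \<le> (\<integral>x. ((norm (?f x))\<^sup>2 + (norm (?g x))\<^sup>2) / 2 \<partial>M)"
    using square_integrable_scaleR[OF assms(1), of "sqrt c"] square_integrable_scaleR[OF assms(2), of "1 / sqrt c"]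
    by (intro order_trans[OF integral_abs_bound] integral_mono abs_inner_le_half_sum_squares
        integrable_abs square_integrable_inner_integrable integrable_divide
        Bochner_Integration.integrable_add) (simp_all add: square_integrable_def)
  also have "\<dots> = (\<integral>x. (c * (norm (f x))\<^sup>2 + (norm (g x))\<^sup>2 / c) / 2 \<partial>M)"
    using assms(3) by (simp add: power_mult_distrib power_divide)
  also have "\<dots> = (c * L2_sqnorm M f + L2_sqnorm M g / c) / 2"
    using assms unfolding L2_sqnorm_def by (simp add: square_integrable_def)
  finally show ?thesis .
qed

lemma L2_ip_eq_0_of_approx:
  assumes g: "square_integrable M g" and fk: "\<And>k. square_integrable M (fk k)"
    and f: "square_integrable M f"
    and lim: "(\<lambda>k. L2_sqnorm M (\<lambda>x. f x - fk k x)) \<longlonglongrightarrow> 0"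
    and orth: "\<And>k. L2_ip M (fk k) g = 0"
  shows "L2_ip M f g = 0"
proof -
  have bound: "\<bar>L2_ip M f g\<bar> \<le> L2_sqnorm M g / c / 2" if c: "c > 0" for c
  proof (rule tendsto_lowerbound)
    have "(\<lambda>k. (c * L2_sqnorm M (\<lambda>x. f x - fk k x) + L2_sqnorm M g / c) / 2)
        \<longlonglongrightarrow> (c * 0 + L2_sqnorm M g / c) / 2"
      by (intro tendsto_intros lim) simp
    thus "(\<lambda>k. (c * L2_sqnorm M (\<lambda>x. f x - fk k x) + L2_sqnorm M g / c) / 2)
        \<longlonglongrightarrow> L2_sqnorm M g / c / 2" by simp
    show "\<forall>\<^sub>F k in sequentially. \<bar>L2_ip M f g\<bar> \<le> (c * L2_sqnorm M (\<lambda>x. f x - fk k x) + L2_sqnorm M g / c) / 2"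
      using L2_ip_abs_le[OF square_integrable_diff[OF f fk] g c] L2_ip_diff_left[OF f fk g] orth
      by (intro always_eventually allI) simp
  qed simp
  have "\<bar>L2_ip M f g\<bar> \<le> 0 + e" if e: "e > 0" for e
  proof -
    let ?c = "(L2_sqnorm M g + 1) / e"
    have "?c > 0" using e L2_sqnorm_nonneg[of M g] by simp
    moreover have "L2_sqnorm M g / ?c / 2 \<le> e"
      using e L2_sqnorm_nonneg[of M g] by (simp add: field_simps)
    ultimately show ?thesis using bound[of ?c] by simp
  qed
  hence "\<bar>L2_ip M f g\<bar> \<le> 0" by (rule field_le_epsilon)
  thus ?thesis by simp
qed

lemma L2_ip_eq_0_of_limits:
  assumes f: "\<And>k. square_integrable M (f k)" "square_integrable M f'"
    and g: "\<And>k. square_integrable M (g k)" "square_integrable M g'"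
    and f_lim: "(\<lambda>k. L2_sqnorm M (\<lambda>x. f' x - f k x)) \<longlonglongrightarrow> 0"
    and g_lim: "(\<lambda>k. L2_sqnorm M (\<lambda>x. g' x - g k x)) \<longlonglongrightarrow> 0"
    and orth: "\<And>j k. L2_ip M (f j) (g k) = 0"
  shows "L2_ip M f' g' = 0"
proof -
  have "L2_ip M f' (g k) = 0" for k
    by (rule L2_ip_eq_0_of_approx[OF g(1) f f_lim orth])
  hence "L2_ip M g' f' = 0"
    by (intro L2_ip_eq_0_of_approx[OF f(2) g g_lim]) (simp add: L2_ip_commute[of M _ f'])
  thus ?thesis by (simp add: L2_ip_commute[of M f'])
qed

lemma L2_sqnorm_diff_limit_le:
  assumes g: "square_integrable M g" and f: "\<And>k. square_integrable M (f k)"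
    and h: "h \<in> borel_measurable M"
    and bound: "\<And>k. k \<ge> j \<Longrightarrow> L2_sqnorm M (\<lambda>x. g x - f k x) \<le> e"
    and lim: "AE x in M. (\<lambda>k. f k x) \<longlonglongrightarrow> h x"
  shows "square_integrable M (\<lambda>x. g x - h x)" and "L2_sqnorm M (\<lambda>x. g x - h x) \<le> e"
proof -
  define u where "u k x = ennreal ((norm (g x - f k x))\<^sup>2)" for k x
  have u: "u k \<in> borel_measurable M" for k
    using square_integrable_measurable[OF square_integrable_diff[OF g f[of k]]]
    unfolding u_def by measurable
  have u_integral: "integral\<^sup>N M (u k) = ennreal (L2_sqnorm M (\<lambda>x. g x - f k x))" for k
    unfolding u_def L2_sqnorm_def using square_integrable_diff[OF g f[of k]]
    by (intro nn_integral_eq_integral) (simp_all add: square_integrable_def)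
  have "AE x in M. liminf (\<lambda>k. u k x) = ennreal ((norm (g x - h x))\<^sup>2)"
    using lim
  proof (rule AE_mp, intro AE_I2 impI)
    fix x assume "(\<lambda>k. f k x) \<longlonglongrightarrow> h x"
    hence "(\<lambda>k. u k x) \<longlonglongrightarrow> ennreal ((norm (g x - h x))\<^sup>2)"
      unfolding u_def by (intro tendsto_intros)
    thus "liminf (\<lambda>k. u k x) = ennreal ((norm (g x - h x))\<^sup>2)"
      by (rule lim_imp_Liminf[OF trivial_limit_sequentially])
  qed
  hence "(\<integral>\<^sup>+ x. ennreal ((norm (g x - h x))\<^sup>2) \<partial>M) = (\<integral>\<^sup>+ x. liminf (\<lambda>k. u k x) \<partial>M)"
    by (intro nn_integral_cong_AE) (auto elim: AE_mp)
  also have "\<dots> \<le> liminf (\<lambda>k. integral\<^sup>N M (u k))" by (rule nn_integral_liminf[OF u])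
  also have "\<dots> \<le> ennreal e"
    unfolding u_integral using bound
    by (intro Liminf_le) (auto simp: eventually_sequentially intro!: ennreal_leI)
  finally have fatou: "(\<integral>\<^sup>+ x. ennreal ((norm (g x - h x))\<^sup>2) \<partial>M) \<le> ennreal e" .
  have gh: "(\<lambda>x. g x - h x) \<in> borel_measurable M"
    using square_integrable_measurable[OF g] h by (rule borel_measurable_diff)
  have int: "integrable M (\<lambda>x. (norm (g x - h x))\<^sup>2)"
    using gh fatou by (intro integrableI_bounded) (simp_all add: le_less_trans)
  thus "square_integrable M (\<lambda>x. g x - h x)" using gh by (simp add: square_integrable_def)
  have "e \<ge> 0" using bound[of j] L2_sqnorm_nonneg[of M "\<lambda>x. g x - f j x"] by simp
  moreover have "ennreal (L2_sqnorm M (\<lambda>x. g x - h x)) \<le> ennreal e"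
    using fatou int unfolding L2_sqnorm_def by (subst nn_integral_eq_integral[symmetric]) simp_all
  ultimately show "L2_sqnorm M (\<lambda>x. g x - h x) \<le> e" by (simp add: ennreal_le_iff)
qed

lemma nn_integral_norm_le_L2_sqnorm:
  assumes g: "square_integrable M g" and S: "S \<in> sets M" "emeasure M S < \<infinity>"
    and vanish: "\<And>x. x \<notin> S \<Longrightarrow> g x = 0" and c: "c > 0"
  shows "(\<integral>\<^sup>+ x. ennreal (norm (g x)) \<partial>M) \<le> ennreal ((c * measure M S + L2_sqnorm M g / c) / 2)"
proof -
  have int: "integrable M (\<lambda>x. (c * indicator S x + (norm (g x))\<^sup>2 / c) / 2)"
    using S square_integrable_integrable[OF g]
    by (intro integrable_divide Bochner_Integration.integrable_add integrable_mult_right) simp_all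
  have "norm (g x) \<le> (c * indicator S x + (norm (g x))\<^sup>2 / c) / 2" for x
  proof (cases "x \<in> S")
    case True
    have "0 \<le> (norm (g x) - c)\<^sup>2" by simp
    thus ?thesis using True c by (simp add: field_simps power2_eq_square)
  qed (simp add: vanish)
  hence "(\<integral>\<^sup>+ x. ennreal (norm (g x)) \<partial>M) \<le> (\<integral>\<^sup>+ x. ennreal ((c * indicator S x + (norm (g x))\<^sup>2 / c) / 2) \<partial>M)"
    by (intro nn_integral_mono ennreal_leI)
  also have "\<dots> = ennreal (\<integral>x. (c * indicator S x + (norm (g x))\<^sup>2 / c) / 2 \<partial>M)"
    by (rule nn_integral_eq_integral[OF int]) (simp add: c less_imp_le)
  also have "(\<integral>x. (c * indicator S x + (norm (g x))\<^sup>2 / c) / 2 \<partial>M) = (c * measure M S + L2_sqnorm M g / c) / 2"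
    using S square_integrable_integrable[OF g] sets.sets_into_space[OF S(1)]
    unfolding L2_sqnorm_def by (simp add: Int_absorb2)
  finally show ?thesis .
qed

text \<open>With \<open>c = 2\<^sup>-\<^sup>k\<close> the \<open>L\<^sup>2\<close> bounds \<open>4\<^sup>-\<^sup>k\<close> of the increments become summable \<open>L\<^sup>1\<close> bounds, so
  the increments are a.e. absolutely summable.\<close>

lemma AE_convergent_of_L2_fast_Cauchy:
  fixes f :: "nat \<Rightarrow> 'a \<Rightarrow> 'b::euclidean_space"
  assumes f: "\<And>k. square_integrable M (f k)" and S: "S \<in> sets M" "emeasure M S < \<infinity>"
    and vanish: "\<And>k x. x \<notin> S \<Longrightarrow> f k x = 0"
    and bound: "\<And>k. L2_sqnorm M (\<lambda>x. f (Suc k) x - f k x) \<le> (1/4)^k"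
  shows "AE x in M. convergent (\<lambda>k. f k x)"
proof -
  define d where "d k x = norm (f (Suc k) x - f k x)" for k x
  define \<mu> where "\<mu> = measure M S"
  have d: "(\<lambda>x. ennreal (d k x)) \<in> borel_measurable M" for k
    using square_integrable_measurable[OF square_integrable_diff[OF f[of "Suc k"] f[of k]]]
    unfolding d_def by measurable
  have L1_bound: "integral\<^sup>N M (\<lambda>x. ennreal (d k x)) \<le> ennreal ((1/2)^k * (\<mu> + 1) / 2)" for k
  proof -
    have c: "(1/2::real)^k > 0" by simp
    have "integral\<^sup>N M (\<lambda>x. ennreal (d k x))
        \<le> ennreal (((1/2)^k * \<mu> + L2_sqnorm M (\<lambda>x. f (Suc k) x - f k x) / (1/2)^k) / 2)"
      unfolding d_def \<mu>_def using vanish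
      by (intro nn_integral_norm_le_L2_sqnorm[OF square_integrable_diff[OF f f] S _ c]) simp
    also have "\<dots> \<le> ennreal (((1/2)^k * \<mu> + (1/4)^k / (1/2)^k) / 2)"
      using bound[of k] by (intro ennreal_leI divide_right_mono add_left_mono) simp_all
    also have "(1/4::real)^k / (1/2)^k = (1/2)^k"
      by (simp add: power_divide[symmetric])
    finally show ?thesis by (simp add: algebra_simps)
  qed
  have summable: "summable (\<lambda>k. (1/2::real)^k * (\<mu> + 1) / 2)"
    by (intro summable_divide summable_mult2 summable_geometric) simp
  have "(\<integral>\<^sup>+ x. (\<Sum>k. ennreal (d k x)) \<partial>M) = (\<Sum>k. integral\<^sup>N M (\<lambda>x. ennreal (d k x)))"
    by (rule nn_integral_suminf[OF d])
  also have "\<dots> \<le> (\<Sum>k. ennreal ((1/2)^k * (\<mu> + 1) / 2))"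
    by (intro suminf_le L1_bound) simp_all
  also have "\<dots> = ennreal (\<Sum>k. (1/2)^k * (\<mu> + 1) / 2)"
    by (rule suminf_ennreal2[OF _ summable]) (simp add: \<mu>_def)
  finally have "(\<integral>\<^sup>+ x. (\<Sum>k. ennreal (d k x)) \<partial>M) < \<infinity>" by (rule le_less_trans) simp
  hence "(\<integral>\<^sup>+ x. (\<Sum>k. ennreal (d k x)) \<partial>M) \<noteq> \<infinity>" by simp
  hence "AE x in M. (\<Sum>k. ennreal (d k x)) \<noteq> \<infinity>"
    by (intro nn_integral_PInf_AE) (use d in measurable)
  thus ?thesis
  proof (rule AE_mp, intro AE_I2 impI)
    fix x assume "(\<Sum>k. ennreal (d k x)) \<noteq> \<infinity>"
    hence "summable (\<lambda>k. d k x)" by (intro summable_suminf_not_top) (simp_all add: d_def)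
    hence "summable (\<lambda>k. f (Suc k) x - f k x)" unfolding d_def by (rule summable_norm_cancel)
    hence "convergent (\<lambda>n. \<Sum>k<n. f (Suc k) x - f k x)" by (simp add: summable_iff_convergent)
    hence "convergent (\<lambda>n. f 0 x + (\<Sum>k<n. f (Suc k) x - f k x))"
      by (intro convergent_add convergent_const)
    thus "convergent (\<lambda>k. f k x)" by (simp add: sum_lessThan_telescope[of "\<lambda>n. f n x"])
  qed
qed

section \<open>Extension by zero and orthogonality of \<open>F\<close> and \<open>G\<close>\<close>

definition zero_ext :: "'a set \<Rightarrow> ('a \<Rightarrow> 'b::real_vector) \<Rightarrow> 'a \<Rightarrow> 'b" where
  "zero_ext S f x = indicator S x *\<^sub>R f x"

lemma zero_ext_in [simp]: "x \<in> S \<Longrightarrow> zero_ext S f x = f x"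
  and zero_ext_out [simp]: "x \<notin> S \<Longrightarrow> zero_ext S f x = 0"
  by (simp_all add: zero_ext_def)

lemma L2_iff_square_integrable: "L2 S f \<longleftrightarrow> square_integrable lborel (zero_ext S f)"
proof -
  have "(\<lambda>x. indicator S x *\<^sub>R (norm (f x))\<^sup>2) = (\<lambda>x. (norm (zero_ext S f x))\<^sup>2)"
    by (simp add: zero_ext_def indicator_def fun_eq_iff)
  thus ?thesis unfolding L2_def square_integrable_def set_borel_measurable_def set_integrable_def
    by (simp add: zero_ext_def[abs_def])
qed

lemma L2_inner_eq_L2_ip: "L2_inner S f g = L2_ip lborel (zero_ext S f) (zero_ext S g)"
proof -
  have "(\<lambda>x. indicator S x *\<^sub>R (f x \<bullet> g x)) = (\<lambda>x. zero_ext S f x \<bullet> zero_ext S g x)"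
    by (simp add: zero_ext_def indicator_def fun_eq_iff)
  thus ?thesis unfolding L2_inner_def L2_ip_def set_lebesgue_integral_def by simp
qed

lemma L2_dist_sq_eq_L2_sqnorm:
  "L2_dist_sq S f g = L2_sqnorm lborel (\<lambda>x. zero_ext S f x - zero_ext S g x)"
proof -
  have "(\<lambda>x. indicator S x *\<^sub>R (norm (f x - g x))\<^sup>2) = (\<lambda>x. (norm (zero_ext S f x - zero_ext S g x))\<^sup>2)"
    by (simp add: zero_ext_def indicator_def fun_eq_iff)
  thus ?thesis unfolding L2_dist_sq_def L2_sqnorm_def set_lebesgue_integral_def by simp
qed

lemma zero_ext_measurable:
  fixes f :: "'a::euclidean_space \<Rightarrow> 'b::euclidean_space"
  assumes "open S" "continuous_on S f"
  shows "zero_ext S f \<in> borel_measurable lborel"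
  unfolding zero_ext_def[abs_def]
  using borel_measurable_continuous_on_indicator[OF _ assms(2)] assms(1) by simp

lemma square_integrable_zero_ext_bounded:
  fixes f :: "'a::euclidean_space \<Rightarrow> 'b::euclidean_space"
  assumes S: "open S" "bounded S" and f: "continuous_on S f"
    and C: "\<And>x. x \<in> S \<Longrightarrow> norm (f x) \<le> C"
  shows "square_integrable lborel (zero_ext S f)"
    and "L2_sqnorm lborel (zero_ext S f) \<le> C\<^sup>2 * measure lborel S"
proof -
  have fin: "emeasure lborel S < \<infinity>" using S(2) by (rule emeasure_bounded_finite)
  have bound: "(norm (zero_ext S f x))\<^sup>2 \<le> C\<^sup>2 * indicator S x" for x
  proof (cases "x \<in> S")
    case True
    thus ?thesis using C[OF True] norm_ge_zero[of "f x"] by (simp add: power_mono)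
  qed simp
  have int: "integrable lborel (\<lambda>x. C\<^sup>2 * indicator S x :: real)"
    using S(1) fin by (intro integrable_mult_right integrable_real_indicator) auto
  have m: "zero_ext S f \<in> borel_measurable lborel" by (rule zero_ext_measurable[OF S(1) f])
  have sq: "integrable lborel (\<lambda>x. (norm (zero_ext S f x))\<^sup>2)"
    using m bound by (intro Bochner_Integration.integrable_bound[OF int]) (auto intro!: AE_I2)
  thus "square_integrable lborel (zero_ext S f)" using m by (simp add: square_integrable_def)
  have "L2_sqnorm lborel (zero_ext S f) \<le> (\<integral>x. C\<^sup>2 * indicator S x \<partial>lborel)"
    unfolding L2_sqnorm_def using sq int bound by (rule integral_mono)
  also have "\<dots> = C\<^sup>2 * measure lborel S" using S(1) fin by simp
  finally show "L2_sqnorm lborel (zero_ext S f) \<le> C\<^sup>2 * measure lborel S" .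
qed

lemma rot_perp_diff: "rot_perp (a - b) = rot_perp a - rot_perp b"
  and rot_perp_0 [simp]: "rot_perp 0 = 0"
  unfolding rot_perp_def by (simp_all add: vec_eq_iff)

lemma norm_rot_perp [simp]: "norm (rot_perp a) = norm a"
  unfolding norm_eq_sqrt_inner inner_vec_def sum_2 rot_perp_def by (simp add: algebra_simps)

lemma borel_measurable_rot_perp: "rot_perp \<in> borel_measurable borel"
proof -
  have "linear rot_perp" unfolding rot_perp_def by (rule linearI) (simp_all add: vec_eq_iff)
  thus ?thesis
    by (intro borel_measurable_continuous_onI linear_continuous_on linear_conv_bounded_linear[THEN iffD1])
qed

lemma square_integrable_rot_perp:
  assumes "square_integrable M f"
  shows "square_integrable M (\<lambda>x. rot_perp (f x))"
  using measurable_compose[OF square_integrable_measurable[OF assms] borel_measurable_rot_perp] assms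
  by (simp add: square_integrable_def o_def)

lemma zero_ext_rot_perp: "zero_ext S (\<lambda>x. rot_perp (f x)) = (\<lambda>x. rot_perp (zero_ext S f x))"
  by (simp add: zero_ext_def indicator_def fun_eq_iff)

lemma test_fun_grad_bounded:
  assumes "test_fun U \<phi>"
  shows "continuous_on UNIV (grad \<phi>)" and "\<exists>C. \<forall>x. norm (grad \<phi> x) \<le> C"
proof -
  show "continuous_on UNIV (grad \<phi>)"
    unfolding grad_def[abs_def]
    by (intro continuous_on_vec_lambda test_fun_continuous[OF test_fun_pder[OF assms]]) simp
  obtain C1 where C1: "\<And>x. \<bar>pder \<phi> (axis 1 1) x\<bar> \<le> C1"
    using test_fun_bounded[OF test_fun_pder[OF assms, of "axis 1 1"]] by auto
  obtain C2 where C2: "\<And>x. \<bar>pder \<phi> (axis 2 1) x\<bar> \<le> C2"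
    using test_fun_bounded[OF test_fun_pder[OF assms, of "axis 2 1"]] by auto
  have "norm (grad \<phi> x) \<le> C1 + C2" for x
    using norm_le_l1_cart[of "grad \<phi> x"] C1[of x] C2[of x] by (simp add: sum_2 grad_def)
  thus "\<exists>C. \<forall>x. norm (grad \<phi> x) \<le> C" by blast
qed

text \<open>Two integrations by parts against the weak gradient reduce this to the symmetry of the
  mixed partials of \<open>\<phi>\<close>.\<close>

lemma weak_grad_orthogonal_rot_grad:
  fixes \<Omega> :: "(real^2) set"
  assumes \<Omega>: "open \<Omega>" "bounded \<Omega>" and \<phi>: "test_fun \<Omega> \<phi>" and wg: "weak_grad \<Omega> g b"
  shows "L2_ip lborel (zero_ext \<Omega> (\<lambda>x. rot_perp (grad \<phi> x))) (zero_ext \<Omega> b) = 0"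
proof -
  define \<psi>1 where "\<psi>1 = pder \<phi> (axis 2 1)"
  define \<psi>2 where "\<psi>2 = pder \<phi> (axis 1 1)"
  have \<psi>: "test_fun \<Omega> \<psi>1" "test_fun \<Omega> \<psi>2"
    unfolding \<psi>1_def \<psi>2_def by (simp_all add: test_fun_pder[OF \<phi>])
  have axis_L2: "square_integrable lborel (zero_ext \<Omega> (\<lambda>x. axis i (\<psi> x)))"
    if \<psi>: "test_fun \<Omega> \<psi>" for i :: 2 and \<psi>
  proof -
    obtain C where "\<And>x. \<bar>\<psi> x\<bar> \<le> C" using test_fun_bounded[OF \<psi>] by blast
    moreover have "continuous_on \<Omega> (\<lambda>x. axis i (\<psi> x))"
      unfolding axis_def
    proof (intro continuous_on_vec_lambda)
      fix j
      show "continuous_on \<Omega> (\<lambda>x. if j = i then \<psi> x else 0)"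
        using continuous_on_subset[OF test_fun_continuous[OF \<psi>] subset_UNIV] by (cases "j = i") simp_all
    qed
    ultimately show ?thesis
      by (intro square_integrable_zero_ext_bounded(1)[OF \<Omega>, of _ C]) (simp_all add: norm_eq_sqrt_inner inner_axis_axis)
  qed
  have bL2: "square_integrable lborel (zero_ext \<Omega> b)"
    using wg unfolding weak_grad_def L2_iff_square_integrable by blast
  have split: "zero_ext \<Omega> (\<lambda>x. rot_perp (grad \<phi> x))
      = (\<lambda>x. zero_ext \<Omega> (\<lambda>x. axis 1 (\<psi>1 x)) x - zero_ext \<Omega> (\<lambda>x. axis 2 (\<psi>2 x)) x)"
    by (simp add: fun_eq_iff vec_eq_iff zero_ext_def rot_perp_def grad_def axis_def forall_2
        \<psi>1_def \<psi>2_def indicator_def)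
  have component: "L2_ip lborel (zero_ext \<Omega> (\<lambda>x. axis i (\<psi> x))) (zero_ext \<Omega> b)
      = (LINT x:\<Omega>|lborel. b x $ i * \<psi> x)" for i \<psi>
    unfolding L2_ip_def set_lebesgue_integral_def
    by (rule Bochner_Integration.integral_cong) (auto simp: zero_ext_def inner_axis' indicator_def)
  have "pder \<psi>1 (axis 1 1) x = pder \<psi>2 (axis 2 1) x" for x
    unfolding \<psi>1_def \<psi>2_def by (rule test_fun_pder_commute[OF \<phi>]) simp_all
  moreover have "(LINT x:\<Omega>|lborel. g x * pder \<psi>1 (axis 1 1) x) = - (LINT x:\<Omega>|lborel. b x $ 1 * \<psi>1 x)"
    and "(LINT x:\<Omega>|lborel. g x * pder \<psi>2 (axis 2 1) x) = - (LINT x:\<Omega>|lborel. b x $ 2 * \<psi>2 x)"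
    using wg \<psi> unfolding weak_grad_def by blast+
  ultimately have "(LINT x:\<Omega>|lborel. b x $ 1 * \<psi>1 x) = (LINT x:\<Omega>|lborel. b x $ 2 * \<psi>2 x)"
    by simp
  thus ?thesis
    unfolding split L2_ip_diff_left[OF axis_L2[OF \<psi>(1)] axis_L2[OF \<psi>(2)] bL2] component by simp
qed

lemma Fspace_orthogonal_Gspace:
  fixes \<Omega> :: "(real^2) set"
  assumes \<Omega>: "open \<Omega>" "bounded \<Omega>" and a: "a \<in> Fspace \<Omega>" and b: "b \<in> Gspace \<Omega>"
  shows "L2_ip lborel (zero_ext \<Omega> a) (zero_ext \<Omega> b) = 0"
proof -
  obtain f w where H: "H10 \<Omega> f w" and aw: "AE x in lborel. x \<in> \<Omega> \<longrightarrow> a x = rot_perp (w x)"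
    using a unfolding Fspace_def by blast
  obtain g where wg: "weak_grad \<Omega> g b" using b unfolding Gspace_def by blast
  obtain \<phi>s where \<phi>s: "\<And>k. test_fun \<Omega> (\<phi>s k)"
    and lim: "(\<lambda>k. L2_dist_sq \<Omega> (\<phi>s k) f + L2_dist_sq \<Omega> (grad (\<phi>s k)) w) \<longlonglongrightarrow> 0"
    using H unfolding H10_def by blast
  have aL2: "square_integrable lborel (zero_ext \<Omega> a)"
    and bL2: "square_integrable lborel (zero_ext \<Omega> b)"
    and wL2: "square_integrable lborel (zero_ext \<Omega> w)"
    using a b H unfolding Fspace_def Gspace_def H10_def weak_grad_def L2_iff_square_integrable by blast+
  have grad_L2: "square_integrable lborel (zero_ext \<Omega> (grad (\<phi>s k)))" for k
  proof -
    obtain C where "\<And>x. norm (grad (\<phi>s k) x) \<le> C" using test_fun_grad_bounded(2)[OF \<phi>s] by blast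
    thus ?thesis
      using square_integrable_zero_ext_bounded(1)[OF \<Omega>
          continuous_on_subset[OF test_fun_grad_bounded(1)[OF \<phi>s] subset_UNIV]] by blast
  qed
  have "(\<lambda>k. L2_dist_sq \<Omega> (grad (\<phi>s k)) w) \<longlonglongrightarrow> 0"
    by (rule tendsto_sandwich[OF _ _ tendsto_const lim])
      (simp_all add: L2_dist_sq_eq_L2_sqnorm L2_sqnorm_nonneg)
  hence "(\<lambda>k. L2_sqnorm lborel (\<lambda>x. rot_perp (zero_ext \<Omega> w x) - rot_perp (zero_ext \<Omega> (grad (\<phi>s k)) x)))
      \<longlonglongrightarrow> 0"
    by (simp add: L2_dist_sq_eq_L2_sqnorm L2_sqnorm_def rot_perp_diff[symmetric] norm_minus_commute)
  hence "L2_ip lborel (\<lambda>x. rot_perp (zero_ext \<Omega> w x)) (zero_ext \<Omega> b) = 0"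
    using weak_grad_orthogonal_rot_grad[OF \<Omega> \<phi>s wg] unfolding zero_ext_rot_perp
    by (intro L2_ip_eq_0_of_approx[OF bL2 square_integrable_rot_perp[OF grad_L2]
          square_integrable_rot_perp[OF wL2]])
  moreover have "L2_ip lborel (zero_ext \<Omega> a) (zero_ext \<Omega> b)
      = L2_ip lborel (\<lambda>x. rot_perp (zero_ext \<Omega> w x)) (zero_ext \<Omega> b)"
    unfolding L2_ip_def
  proof (rule integral_cong_AE)
    show "AE x in lborel. zero_ext \<Omega> a x \<bullet> zero_ext \<Omega> b x = rot_perp (zero_ext \<Omega> w x) \<bullet> zero_ext \<Omega> b x"
      using aw by (rule AE_mp) (intro AE_I2, simp add: zero_ext_def indicator_def)
  qed (use aL2 bL2 square_integrable_rot_perp[OF wL2] in \<open>simp_all add: square_integrable_def borel_measurable_inner\<close>)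
  ultimately show ?thesis by simp
qed

section \<open>Slices and layers of the cylinder\<close>

lemma borel_measurable_slice:
  fixes F :: "'a::euclidean_space \<times> 'b::euclidean_space \<Rightarrow> 'c::euclidean_space"
  assumes "F \<in> borel_measurable lborel"
  shows "(\<lambda>y. F (y, t)) \<in> borel_measurable lborel"
proof -
  have "F \<in> borel_measurable (lborel \<Otimes>\<^sub>M lborel)" using assms by (simp add: lborel_prod)
  thus ?thesis by (rule measurable_Pair1) simp
qed

lemma L2_ip_by_slices:
  fixes F G :: "'a::euclidean_space \<times> 'b::euclidean_space \<Rightarrow> 'c::euclidean_space"
  assumes "square_integrable lborel F" "square_integrable lborel G"
  shows "L2_ip lborel F G = (\<integral>t. L2_ip lborel (\<lambda>y. F (y, t)) (\<lambda>y. G (y, t)) \<partial>lborel)"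
    and "integrable lborel (\<lambda>t. L2_ip lborel (\<lambda>y. F (y, t)) (\<lambda>y. G (y, t)))"
proof -
  have P: "pair_sigma_finite (lborel :: 'a measure) (lborel :: 'b measure)"
    by (simp add: pair_sigma_finite_def lborel.sigma_finite_measure_axioms)
  have "(\<lambda>(y, t). F (y, t) \<bullet> G (y, t)) = (\<lambda>x. F x \<bullet> G x)" by auto
  hence "integrable (lborel \<Otimes>\<^sub>M lborel) (\<lambda>(y, t). F (y, t) \<bullet> G (y, t))"
    using square_integrable_inner_integrable[OF assms] by (simp add: lborel_prod)
  from pair_sigma_finite.integral_snd[OF P this] pair_sigma_finite.integrable_snd[OF P this]
  show "L2_ip lborel F G = (\<integral>t. L2_ip lborel (\<lambda>y. F (y, t)) (\<lambda>y. G (y, t)) \<partial>lborel)"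
    and "integrable lborel (\<lambda>t. L2_ip lborel (\<lambda>y. F (y, t)) (\<lambda>y. G (y, t)))"
    unfolding L2_ip_def by (simp_all add: lborel_prod case_prod_beta')
qed

lemma L2_ip_eq_0_by_slices:
  fixes F G :: "'a::euclidean_space \<times> 'b::euclidean_space \<Rightarrow> 'c::euclidean_space"
  assumes "square_integrable lborel F" "square_integrable lborel G"
    and "\<And>t. L2_ip lborel (\<lambda>y. F (y, t)) (\<lambda>y. G (y, t)) = 0"
  shows "L2_ip lborel F G = 0"
  using L2_ip_by_slices(1)[OF assms(1,2)] assms(3) by simp

lemma L2_sqnorm_le_by_slices:
  fixes F :: "'a::euclidean_space \<times> real \<Rightarrow> 'c::euclidean_space"
  assumes F: "square_integrable lborel F" and L: "L \<ge> 0"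
    and vanish: "\<And>t y. t \<notin> {0<..<L} \<Longrightarrow> F (y, t) = 0"
    and bound: "\<And>t. t \<in> {0<..<L} \<Longrightarrow> L2_sqnorm lborel (\<lambda>y. F (y, t)) \<le> e"
  shows "L2_sqnorm lborel F \<le> e * L"
proof -
  have "L2_sqnorm lborel F = (\<integral>t. L2_sqnorm lborel (\<lambda>y. F (y, t)) \<partial>lborel)"
    using L2_ip_by_slices(1)[OF F F] by (simp add: L2_sqnorm_eq_L2_ip)
  also have "\<dots> \<le> (\<integral>t. e * indicator {0<..<L} t \<partial>lborel)"
  proof (rule integral_mono)
    show "integrable lborel (\<lambda>t. L2_sqnorm lborel (\<lambda>y. F (y, t)))"
      using L2_ip_by_slices(2)[OF F F] by (simp add: L2_sqnorm_eq_L2_ip)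
    show "L2_sqnorm lborel (\<lambda>y. F (y, t)) \<le> e * indicator {0<..<L} t" for t
      using bound[of t] vanish[of t] by (cases "t \<in> {0<..<L}") (simp_all add: L2_sqnorm_def)
  qed (use L in simp)
  also have "\<dots> = e * L" using L by simp
  finally show ?thesis .
qed

lemma square_integrable_by_slices:
  fixes F :: "'a::euclidean_space \<times> real \<Rightarrow> 'c::euclidean_space"
  assumes F: "F \<in> borel_measurable lborel"
    and vanish: "\<And>t y. t \<notin> {0<..<L} \<Longrightarrow> F (y, t) = 0"
    and slices: "\<And>t. t \<in> {0<..<L} \<Longrightarrow>
        square_integrable lborel (\<lambda>y. F (y, t)) \<and> L2_sqnorm lborel (\<lambda>y. F (y, t)) \<le> C"
  shows "square_integrable lborel F"
proof -
  have P: "pair_sigma_finite (lborel :: 'a measure) (lborel :: real measure)"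
    by (simp add: pair_sigma_finite_def lborel.sigma_finite_measure_axioms)
  have m: "(\<lambda>x. ennreal ((norm (F x))\<^sup>2)) \<in> borel_measurable (lborel \<Otimes>\<^sub>M lborel)"
    using F by (simp add: lborel_prod)
  have slice_integral: "(\<integral>\<^sup>+ y. ennreal ((norm (F (y, t)))\<^sup>2) \<partial>lborel) \<le> ennreal C * indicator {0<..<L} t"
    for t
  proof (cases "t \<in> {0<..<L}")
    case True
    hence "(\<integral>\<^sup>+ y. ennreal ((norm (F (y, t)))\<^sup>2) \<partial>lborel) = ennreal (L2_sqnorm lborel (\<lambda>y. F (y, t)))"
      using slices unfolding L2_sqnorm_def square_integrable_def
      by (intro nn_integral_eq_integral) auto
    thus ?thesis using slices[OF True] True by (simp add: ennreal_leI)
  qed (simp add: vanish)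
  have "(\<integral>\<^sup>+ x. ennreal ((norm (F x))\<^sup>2) \<partial>lborel)
      = (\<integral>\<^sup>+ t. (\<integral>\<^sup>+ y. ennreal ((norm (F (y, t)))\<^sup>2) \<partial>lborel) \<partial>lborel)"
    using pair_sigma_finite.nn_integral_snd[OF P m] by (simp add: lborel_prod)
  also have "\<dots> \<le> (\<integral>\<^sup>+ t. ennreal C * indicator {0<..<L} t \<partial>lborel)"
    by (intro nn_integral_mono slice_integral)
  also have "\<dots> < \<infinity>"
    by (cases "0 \<le> L") (simp_all add: nn_integral_cmult_indicator ennreal_mult_less_top)
  finally have "integrable lborel (\<lambda>x. (norm (F x))\<^sup>2)"
    using F by (intro integrableI_bounded) simp_all
  thus ?thesis using F by (simp add: square_integrable_def)
qed

definition layer_index :: "real \<Rightarrow> nat \<Rightarrow> real \<Rightarrow> nat" where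
  "layer_index L N t = nat \<lfloor>t * real N / L\<rfloor>"

definition layer_start :: "real \<Rightarrow> nat \<Rightarrow> nat \<Rightarrow> real" where
  "layer_start L N n = real n * (L / real N)"

lemma layer_start_mem:
  assumes "L > 0" "n < N"
  shows "layer_start L N n \<in> {0..L}"
proof -
  have "real n * (L / real N) \<le> real N * (L / real N)"
    using assms by (intro mult_right_mono) simp_all
  thus ?thesis using assms by (simp add: layer_start_def)
qed

lemma layer_index:
  assumes L: "L > 0" and N: "N \<ge> 1" and t: "t \<in> {0<..<L}"
  shows "layer_index L N t < N"
    and "\<bar>t - layer_start L N (layer_index L N t)\<bar> < L / real N"
    and "\<And>n. n < N \<Longrightarrow> layer_chi L N n t = (if n = layer_index L N t then 1 else 0)"
proof -
  define r where "r = t * real N / L"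
  have r: "0 < r" "r < real N" using t L N by (simp_all add: r_def field_simps)
  have idx: "real (layer_index L N t) = of_int \<lfloor>r\<rfloor>"
    using r(1) unfolding layer_index_def r_def by simp
  show "layer_index L N t < N" using idx r(2) by linarith
  have "layer_start L N (layer_index L N t) = of_int \<lfloor>r\<rfloor> * (L / real N)"
    unfolding layer_start_def idx ..
  moreover have "t = r * (L / real N)" using L N by (simp add: r_def field_simps)
  ultimately have diff: "t - layer_start L N (layer_index L N t) = (r - of_int \<lfloor>r\<rfloor>) * (L / real N)"
    by (simp add: algebra_simps)
  have frac: "0 \<le> r - of_int \<lfloor>r\<rfloor>" "r - of_int \<lfloor>r\<rfloor> < 1" by linarith+
  have mesh: "L / real N > 0" using L N by simp
  show "\<bar>t - layer_start L N (layer_index L N t)\<bar> < L / real N"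
    using mult_strict_right_mono[OF frac(2) mesh] mult_nonneg_nonneg[OF frac(1) less_imp_le[OF mesh]]
    unfolding diff by simp
  fix n assume "n < N"
  have index_iff: "n = layer_index L N t \<longleftrightarrow> real n \<le> r \<and> r < real n + 1"
    using idx by (metis floor_eq_iff floor_of_nat of_int_of_nat_eq of_nat_eq_iff)
  have "t < L / real N \<longleftrightarrow> r < 1" "real n * (L / real N) \<le> t \<longleftrightarrow> real n \<le> r"
    "t < (real n + 1) * (L / real N) \<longleftrightarrow> r < real n + 1"
    using L N by (simp_all add: r_def field_simps)
  thus "layer_chi L N n t = (if n = layer_index L N t then 1 else 0)"
    using r t unfolding layer_chi_def Let_def index_iff by (simp add: indicator_def)
qed

lemma zero_ext_step_fun:
  assumes "L > 0" "N \<ge> 1"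
  shows "zero_ext (cyl \<Omega> L) (step_fun L N u) (y, t) =
    (if t \<in> {0<..<L} then zero_ext \<Omega> (u (layer_index L N t)) y else 0)"
proof (cases "t \<in> {0<..<L}")
  case True
  have "step_fun L N u (y, t) = (\<Sum>n<N. (if n = layer_index L N t then 1 else 0) *\<^sub>R u n y)"
    unfolding step_fun_def using layer_index(3)[OF assms True] by (intro sum.cong) simp_all
  also have "\<dots> = u (layer_index L N t) y"
    using layer_index(1)[OF assms True] by (simp add: if_distrib[of "\<lambda>c. c *\<^sub>R _"] cong: if_cong)
  finally show ?thesis using True by (simp add: zero_ext_def cyl_def indicator_def)
qed (auto simp: cyl_def)

lemma zero_ext_step_fun_measurable:
  assumes "\<And>n. n < N \<Longrightarrow> zero_ext \<Omega> (u n) \<in> borel_measurable lborel"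
  shows "zero_ext (cyl \<Omega> L) (step_fun L N u) \<in> borel_measurable lborel"
proof -
  have "zero_ext (cyl \<Omega> L) (step_fun L N u)
      = (\<lambda>x. \<Sum>n<N. (indicator {0<..<L} (snd x) * layer_chi L N n (snd x)) *\<^sub>R zero_ext \<Omega> (u n) (fst x))"
    by (auto simp: fun_eq_iff zero_ext_def step_fun_def cyl_def indicator_def scaleR_sum_right)
  moreover have "layer_chi L N n \<in> borel_measurable lborel" for n
    unfolding layer_chi_def[abs_def] Let_def by (cases "n = 0") simp_all
  ultimately show ?thesis
    using assms unfolding lborel_prod[symmetric]
    by (simp only:) (intro borel_measurable_sum borel_measurable_scaleR borel_measurable_times
        measurable_compose[OF measurable_snd] measurable_compose[OF measurable_fst]; simp)
qed

lemma square_integrable_step_fun: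
  assumes L: "L > 0" and N: "N \<ge> 1"
    and u: "\<And>n. n < N \<Longrightarrow> square_integrable lborel (zero_ext \<Omega> (u n))"
    and bound: "\<And>n. n < N \<Longrightarrow> L2_sqnorm lborel (zero_ext \<Omega> (u n)) \<le> C"
  shows "square_integrable lborel (zero_ext (cyl \<Omega> L) (step_fun L N u))"
proof (rule square_integrable_by_slices)
  show "zero_ext (cyl \<Omega> L) (step_fun L N u) \<in> borel_measurable lborel"
    using u square_integrable_measurable by (intro zero_ext_step_fun_measurable) blast
  show "zero_ext (cyl \<Omega> L) (step_fun L N u) (y, t) = 0" if "t \<notin> {0<..<L}" for t y
    using that by (auto simp: zero_ext_step_fun[OF L N])
  fix t assume t: "t \<in> {0<..<L}"
  show "square_integrable lborel (\<lambda>y. zero_ext (cyl \<Omega> L) (step_fun L N u) (y, t)) \<and>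
      L2_sqnorm lborel (\<lambda>y. zero_ext (cyl \<Omega> L) (step_fun L N u) (y, t)) \<le> C"
    using t u[OF layer_index(1)[OF L N t]] bound[OF layer_index(1)[OF L N t]]
    by (simp add: zero_ext_step_fun[OF L N])
qed

lemma L2_sqnorm_tendsto_0I:
  assumes "\<And>a. a > 0 \<Longrightarrow> \<forall>\<^sub>F k in F. L2_sqnorm M (f k) < a"
  shows "((\<lambda>k. L2_sqnorm M (f k)) \<longlongrightarrow> 0) F"
proof (rule order_tendstoI)
  fix a :: real assume "a < 0"
  hence "a < L2_sqnorm M (f k)" for k using L2_sqnorm_nonneg[of M "f k"] by linarith
  thus "\<forall>\<^sub>F k in F. a < L2_sqnorm M (f k)" by simp
qed (rule assms)

lemma L2_sqnorm_tendsto_0_by_slices: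
  fixes F :: "nat \<Rightarrow> 'a::euclidean_space \<times> real \<Rightarrow> 'c::euclidean_space"
  assumes L: "L \<ge> 0"
    and vanish: "\<And>N t y. t \<notin> {0<..<L} \<Longrightarrow> F N (y, t) = 0"
    and slices: "\<And>e. e > 0 \<Longrightarrow> \<forall>\<^sub>F N in sequentially. square_integrable lborel (F N) \<and>
        (\<forall>t\<in>{0<..<L}. L2_sqnorm lborel (\<lambda>y. F N (y, t)) \<le> e)"
  shows "(\<lambda>N. L2_sqnorm lborel (F N)) \<longlonglongrightarrow> 0"
proof (rule L2_sqnorm_tendsto_0I)
  fix a :: real assume a: "a > 0"
  define e where "e = a / (L + 1) / 2"
  have "0 < L * a + a * 2" using a L by (simp add: add_nonneg_pos)
  hence e: "e > 0" "e * L < a" using a L by (simp_all add: e_def field_simps)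
  show "\<forall>\<^sub>F N in sequentially. L2_sqnorm lborel (F N) < a"
    using slices[OF e(1)]
  proof (rule eventually_mono)
    fix N assume "square_integrable lborel (F N) \<and> (\<forall>t\<in>{0<..<L}. L2_sqnorm lborel (\<lambda>y. F N (y, t)) \<le> e)"
    hence "L2_sqnorm lborel (F N) \<le> e * L"
      using L2_sqnorm_le_by_slices[OF _ L, of "F N" e] vanish by blast
    thus "L2_sqnorm lborel (F N) < a" using e(2) by simp
  qed
qed

lemma eventually_mesh_less: "d > 0 \<Longrightarrow> \<forall>\<^sub>F N in sequentially. L / real N < d"
  using order_tendstoD(2)[OF lim_const_over_n[of L]] by simp

section \<open>The limit decomposition\<close>

locale layered_helmholtz =
  fixes \<Omega> :: "(real^2) set" and L :: real and v :: "(real^2) \<times> real \<Rightarrow> real^2"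
    and v1n v2n :: "nat \<Rightarrow> nat \<Rightarrow> real^2 \<Rightarrow> real^2"
  assumes open_\<Omega>: "open \<Omega>" and bounded_\<Omega>: "bounded \<Omega>" and L_pos: "L > 0"
    and v_continuous: "continuous_on (closure \<Omega> \<times> {0..L}) v"
    and decomposition: "\<And>N n. 1 \<le> N \<Longrightarrow> n < N \<Longrightarrow>
        v1n N n \<in> Fspace \<Omega> \<and> v2n N n \<in> Gspace \<Omega> \<and>
        (AE y in lborel. y \<in> \<Omega> \<longrightarrow> v1n N n y + v2n N n y = v (y, real n * (L / real N)))"
begin

definition slice :: "real \<Rightarrow> real^2 \<Rightarrow> real^2" where
  "slice t = zero_ext \<Omega> (\<lambda>y. v (y, t))"

definition Fpart :: "nat \<Rightarrow> nat \<Rightarrow> real^2 \<Rightarrow> real^2" where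
  "Fpart N n = zero_ext \<Omega> (v1n N n)"

definition Gpart :: "nat \<Rightarrow> nat \<Rightarrow> real^2 \<Rightarrow> real^2" where
  "Gpart N n = zero_ext \<Omega> (v2n N n)"

definition v_bound :: real where
  "v_bound = (SOME K. \<forall>x\<in>closure \<Omega> \<times> {0..L}. norm (v x) \<le> K)"

lemma norm_v_le_v_bound: "x \<in> closure \<Omega> \<times> {0..L} \<Longrightarrow> norm (v x) \<le> v_bound"
proof -
  have "compact (v ` (closure \<Omega> \<times> {0..L}))"
    using bounded_\<Omega> by (intro compact_continuous_image[OF v_continuous] compact_Times) auto
  hence "bounded (v ` (closure \<Omega> \<times> {0..L}))" by (rule compact_imp_bounded)
  then obtain K where "\<forall>x\<in>closure \<Omega> \<times> {0..L}. norm (v x) \<le> K"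
    unfolding bounded_iff by auto
  hence "\<forall>x\<in>closure \<Omega> \<times> {0..L}. norm (v x) \<le> v_bound"
    unfolding v_bound_def by (rule someI)
  thus "x \<in> closure \<Omega> \<times> {0..L} \<Longrightarrow> norm (v x) \<le> v_bound" by blast
qed

lemma slice_continuous: "t \<in> {0..L} \<Longrightarrow> continuous_on \<Omega> (\<lambda>y. v (y, t))"
  using closure_subset
  by (intro continuous_on_compose2[OF v_continuous continuous_on_Pair]) (auto intro: continuous_intros)

lemma slice_L2:
  assumes "t \<in> {0..L}"
  shows "square_integrable lborel (slice t)"
    and "L2_sqnorm lborel (slice t) \<le> v_bound\<^sup>2 * measure lborel \<Omega>"
  using square_integrable_zero_ext_bounded[OF open_\<Omega> bounded_\<Omega> slice_continuous[OF assms]]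
    norm_v_le_v_bound assms closure_subset
  unfolding slice_def by blast+

lemma slice_uniformly_continuous:
  assumes e: "e > 0"
  shows "\<exists>d>0. \<forall>t\<in>{0..L}. \<forall>t'\<in>{0..L}. \<bar>t - t'\<bar> < d \<longrightarrow>
    L2_sqnorm lborel (\<lambda>y. slice t y - slice t' y) \<le> e"
proof -
  define \<mu> where "\<mu> = measure lborel \<Omega>"
  define \<eta> where "\<eta> = sqrt (e / (\<mu> + 1))"
  have \<mu>: "\<mu> \<ge> 0" by (simp add: \<mu>_def)
  have \<eta>: "\<eta> > 0" "\<eta>\<^sup>2 * \<mu> \<le> e"
    using e \<mu> by (simp_all add: \<eta>_def field_simps add_nonneg_pos)
  have "uniformly_continuous_on (closure \<Omega> \<times> {0..L}) v"
    using bounded_\<Omega> by (intro compact_uniformly_continuous[OF v_continuous] compact_Times) auto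
  then obtain d where d: "d > 0" and dv: "\<And>x x'. x \<in> closure \<Omega> \<times> {0..L} \<Longrightarrow>
      x' \<in> closure \<Omega> \<times> {0..L} \<Longrightarrow> dist x' x < d \<Longrightarrow> dist (v x') (v x) < \<eta>"
    unfolding uniformly_continuous_on_def using \<eta>(1) by metis
  have "L2_sqnorm lborel (\<lambda>y. slice t y - slice t' y) \<le> e"
    if t: "t \<in> {0..L}" "t' \<in> {0..L}" "\<bar>t - t'\<bar> < d" for t t'
  proof -
    have "norm (v (y, t) - v (y, t')) \<le> \<eta>" if "y \<in> \<Omega>" for y
      using dv[of "(y, t')" "(y, t)"] that t closure_subset
      by (force simp: dist_Pair_Pair dist_real_def dist_norm)
    hence "L2_sqnorm lborel (zero_ext \<Omega> (\<lambda>y. v (y, t) - v (y, t'))) \<le> \<eta>\<^sup>2 * \<mu>"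
      unfolding \<mu>_def using square_integrable_zero_ext_bounded(2)[OF open_\<Omega> bounded_\<Omega>
        continuous_on_diff[OF slice_continuous slice_continuous]] t by blast
    moreover have "(\<lambda>y. slice t y - slice t' y) = zero_ext \<Omega> (\<lambda>y. v (y, t) - v (y, t'))"
      by (simp add: slice_def zero_ext_def fun_eq_iff algebra_simps)
    ultimately show ?thesis using \<eta>(2) by simp
  qed
  thus ?thesis using d by blast
qed

definition modulus :: "real \<Rightarrow> real" where
  "modulus e = (SOME d. d > 0 \<and> (\<forall>t\<in>{0..L}. \<forall>t'\<in>{0..L}. \<bar>t - t'\<bar> < d \<longrightarrow>
     L2_sqnorm lborel (\<lambda>y. slice t y - slice t' y) \<le> e))"

lemma modulus:
  assumes "e > 0"
  shows "modulus e > 0"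
    and "\<And>t t'. t \<in> {0..L} \<Longrightarrow> t' \<in> {0..L} \<Longrightarrow> \<bar>t - t'\<bar> < modulus e \<Longrightarrow>
      L2_sqnorm lborel (\<lambda>y. slice t y - slice t' y) \<le> e"
  using someI_ex[OF slice_uniformly_continuous[OF assms]] unfolding modulus_def[symmetric] by auto

lemma slice_tendsto:
  assumes s: "\<And>k. s k \<in> {0..L}" and t: "t \<in> {0..L}" and lim: "s \<longlonglongrightarrow> t"
  shows "(\<lambda>k. L2_sqnorm lborel (\<lambda>y. slice t y - slice (s k) y)) \<longlonglongrightarrow> 0"
proof (rule L2_sqnorm_tendsto_0I[where f = "\<lambda>k y. slice t y - slice (s k) y"])
  fix a :: real assume a: "a > 0"
  have "\<forall>\<^sub>F k in sequentially. dist (s k) t < modulus (a / 2)"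
    using lim modulus(1) a by (intro tendstoD) simp_all
  thus "\<forall>\<^sub>F k in sequentially. L2_sqnorm lborel (\<lambda>y. slice t y - slice (s k) y) < a"
  proof (rule eventually_mono)
    fix k assume "dist (s k) t < modulus (a / 2)"
    hence "L2_sqnorm lborel (\<lambda>y. slice t y - slice (s k) y) \<le> a / 2"
      using modulus(2)[of "a / 2" t "s k"] a t s by (simp add: dist_real_def abs_minus_commute)
    thus "L2_sqnorm lborel (\<lambda>y. slice t y - slice (s k) y) < a" using a by simp
  qed
qed

context
  fixes N n :: nat
  assumes grid: "1 \<le> N" "n < N"
begin

lemma Fpart_L2: "square_integrable lborel (Fpart N n)"
  and Gpart_L2: "square_integrable lborel (Gpart N n)"
  and Fpart_plus_Gpart: "AE y in lborel. Fpart N n y + Gpart N n y = slice (layer_start L N n) y"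
  using decomposition[OF grid]
  unfolding Fpart_def Gpart_def slice_def layer_start_def Fspace_def Gspace_def L2_iff_square_integrable
  by (auto elim!: AE_mp intro!: AE_I2 simp: zero_ext_def indicator_def)

lemma layer_start_in: "layer_start L N n \<in> {0..L}"
  using layer_start_mem[OF L_pos grid(2)] .

lemma Fpart_orthogonal_Gpart:
  assumes "1 \<le> N'" "n' < N'"
  shows "L2_ip lborel (Fpart N n) (Gpart N' n') = 0"
  unfolding Fpart_def Gpart_def using decomposition[OF grid] decomposition[OF assms]
  by (intro Fspace_orthogonal_Gspace[OF open_\<Omega> bounded_\<Omega>]) simp_all

lemma Fpart_Gpart_L2_bound:
  "L2_sqnorm lborel (Fpart N n) \<le> v_bound\<^sup>2 * measure lborel \<Omega>"
  "L2_sqnorm lborel (Gpart N n) \<le> v_bound\<^sup>2 * measure lborel \<Omega>"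
  using L2_sqnorm_orthogonal_sum[OF Fpart_L2 Gpart_L2
      square_integrable_measurable[OF slice_L2(1)[OF layer_start_in]]
      Fpart_plus_Gpart Fpart_orthogonal_Gpart[OF grid]]
    slice_L2(2)[OF layer_start_in] L2_sqnorm_nonneg[of lborel "Fpart N n"]
    L2_sqnorm_nonneg[of lborel "Gpart N n"]
  by linarith+

end

text \<open>Pythagoras for the orthogonal differences of the \<open>F\<close>- and of the \<open>G\<close>-parts.\<close>

lemma Fpart_dist_le:
  assumes N: "1 \<le> N" "n < N" and N': "1 \<le> N'" "n' < N'"
  shows "L2_sqnorm lborel (\<lambda>y. Fpart N n y - Fpart N' n' y)
    \<le> L2_sqnorm lborel (\<lambda>y. slice (layer_start L N n) y - slice (layer_start L N' n') y)"
proof -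
  note F = Fpart_L2[OF N] Fpart_L2[OF N'] and G = Gpart_L2[OF N] Gpart_L2[OF N']
  have "L2_ip lborel (\<lambda>y. Fpart N n y - Fpart N' n' y) (\<lambda>y. Gpart N n y - Gpart N' n' y) = 0"
    using Fpart_orthogonal_Gpart N N'
    by (simp add: L2_ip_diff_left[OF F square_integrable_diff[OF G]] L2_ip_diff_right[OF G F(1)]
        L2_ip_diff_right[OF G F(2)])
  moreover have "AE y in lborel. (Fpart N n y - Fpart N' n' y) + (Gpart N n y - Gpart N' n' y)
      = slice (layer_start L N n) y - slice (layer_start L N' n') y"
    using Fpart_plus_Gpart[OF N] Fpart_plus_Gpart[OF N'] by eventually_elim (simp add: algebra_simps)
  ultimately have "L2_sqnorm lborel (\<lambda>y. slice (layer_start L N n) y - slice (layer_start L N' n') y)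
      = L2_sqnorm lborel (\<lambda>y. Fpart N n y - Fpart N' n' y) + L2_sqnorm lborel (\<lambda>y. Gpart N n y - Gpart N' n' y)"
    using slice_L2(1)[OF layer_start_in[OF N]] slice_L2(1)[OF layer_start_in[OF N']]
    by (intro L2_sqnorm_orthogonal_sum square_integrable_diff F G
        square_integrable_measurable[OF square_integrable_diff])
  thus ?thesis using L2_sqnorm_nonneg[of lborel "\<lambda>y. Gpart N n y - Gpart N' n' y"] by linarith
qed

definition Fstep :: "nat \<Rightarrow> (real^2) \<times> real \<Rightarrow> real^2" where
  "Fstep N = zero_ext (cyl \<Omega> L) (step_fun L N (v1n N))"

definition Gstep :: "nat \<Rightarrow> (real^2) \<times> real \<Rightarrow> real^2" where
  "Gstep N = zero_ext (cyl \<Omega> L) (step_fun L N (v2n N))"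

lemma Fstep_slice: "N \<ge> 1 \<Longrightarrow> t \<in> {0<..<L} \<Longrightarrow> Fstep N (y, t) = Fpart N (layer_index L N t) y"
  and Gstep_slice: "N \<ge> 1 \<Longrightarrow> t \<in> {0<..<L} \<Longrightarrow> Gstep N (y, t) = Gpart N (layer_index L N t) y"
  unfolding Fstep_def Gstep_def Fpart_def Gpart_def by (simp_all add: zero_ext_step_fun[OF L_pos])

lemma Fstep_vanish: "t \<notin> {0<..<L} \<Longrightarrow> Fstep N (y, t) = 0"
  and Gstep_vanish: "t \<notin> {0<..<L} \<Longrightarrow> Gstep N (y, t) = 0"
  by (simp_all add: Fstep_def Gstep_def cyl_def)

lemma Fstep_L2: "N \<ge> 1 \<Longrightarrow> square_integrable lborel (Fstep N)"
  and Gstep_L2: "N \<ge> 1 \<Longrightarrow> square_integrable lborel (Gstep N)"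
  unfolding Fstep_def Gstep_def using Fpart_L2 Gpart_L2 Fpart_Gpart_L2_bound
  by (auto intro!: square_integrable_step_fun[OF L_pos] simp: Fpart_def Gpart_def)

text \<open>A subsequence of layer counts along which consecutive \<open>F\<close>-parts of every slice are
  \<open>4\<^sup>-\<^sup>k\<close>-close: the mesh of the \<open>k\<close>-th grid is below the moduli of continuity of all
  earlier tolerances.\<close>

definition tol :: "nat \<Rightarrow> real" where
  "tol j = (1/4)^j"

definition mesh :: "nat \<Rightarrow> real" where
  "mesh k = Min ((\<lambda>i. modulus (tol i)) ` {..k})"

definition layers :: "nat \<Rightarrow> nat" where
  "layers k = nat \<lceil>2 * L / mesh k\<rceil> + k + 1"

definition grid_time :: "nat \<Rightarrow> real \<Rightarrow> real" where
  "grid_time k t = layer_start L (layers k) (layer_index L (layers k) t)"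

definition Fseq :: "nat \<Rightarrow> real \<Rightarrow> real^2 \<Rightarrow> real^2" where
  "Fseq k t = Fpart (layers k) (layer_index L (layers k) t)"

definition Gseq :: "nat \<Rightarrow> real \<Rightarrow> real^2 \<Rightarrow> real^2" where
  "Gseq k t = Gpart (layers k) (layer_index L (layers k) t)"

lemma mesh_pos: "mesh k > 0"
  unfolding mesh_def using modulus(1) by (subst Min_gr_iff) (auto simp: tol_def)

lemma mesh_le: "j \<le> k \<Longrightarrow> mesh k \<le> modulus (tol j)"
  unfolding mesh_def by (intro Min_le) auto

lemma layers_ge_1: "layers k \<ge> 1"
  by (simp add: layers_def)

lemma layers_mesh: "L / real (layers k) < mesh k / 2" and layers_ge: "real (Suc k) \<le> real (layers k)"
proof -
  have "2 * L / mesh k < real (layers k)"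
    unfolding layers_def using real_nat_ceiling_ge[of "2 * L / mesh k"] by linarith
  moreover have "real (layers k) > 0" using layers_ge_1[of k] by simp
  ultimately show "L / real (layers k) < mesh k / 2"
    using mesh_pos[of k] by (simp add: field_simps)
  show "real (Suc k) \<le> real (layers k)" by (simp add: layers_def)
qed

context
  fixes t assumes t: "t \<in> {0<..<L}"
begin

lemma layer_index_layers: "layer_index L (layers k) t < layers k"
  by (rule layer_index(1)[OF L_pos layers_ge_1 t])

lemma grid_time: "grid_time k t \<in> {0..L}" "\<bar>t - grid_time k t\<bar> < L / real (layers k)"
  unfolding grid_time_def
  by (rule layer_start_in[OF layers_ge_1 layer_index_layers], rule layer_index(2)[OF L_pos layers_ge_1 t])

lemma Fseq_L2: "square_integrable lborel (Fseq k t)"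
  and Gseq_L2: "square_integrable lborel (Gseq k t)"
  unfolding Fseq_def Gseq_def
  by (rule Fpart_L2[OF layers_ge_1 layer_index_layers], rule Gpart_L2[OF layers_ge_1 layer_index_layers])

lemma Fseq_Cauchy:
  assumes "j \<le> k"
  shows "L2_sqnorm lborel (\<lambda>y. Fseq j t y - Fseq k t y) \<le> tol j"
proof -
  have "\<bar>grid_time j t - grid_time k t\<bar> < mesh j / 2 + mesh k / 2"
    using grid_time(2)[of j] grid_time(2)[of k] layers_mesh[of j] layers_mesh[of k] by linarith
  also have "\<dots> \<le> modulus (tol j)" using mesh_le[OF assms] mesh_le[of j j] by simp
  finally have "L2_sqnorm lborel (\<lambda>y. slice (grid_time j t) y - slice (grid_time k t) y) \<le> tol j"
    using modulus(2) grid_time(1) by (simp add: tol_def)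
  thus ?thesis
    unfolding Fseq_def grid_time_def
    by (rule order_trans[OF Fpart_dist_le[OF layers_ge_1 layer_index_layers[of j]
          layers_ge_1 layer_index_layers[of k]]])
qed

lemma grid_time_tendsto: "(\<lambda>k. grid_time k t) \<longlonglongrightarrow> t"
proof -
  have lim: "(\<lambda>k. L / real (Suc k)) \<longlonglongrightarrow> 0"
    using LIMSEQ_Suc[OF lim_const_over_n[of L]] by simp
  have "norm (grid_time k t - t) \<le> L / real (Suc k)" for k
  proof -
    have "L / real (layers k) \<le> L / real (Suc k)"
      by (rule divide_left_mono[OF layers_ge]) (use L_pos layers_ge_1[of k] in auto)
    thus ?thesis using grid_time(2)[of k] by (simp add: abs_minus_commute)
  qed
  hence "(\<lambda>k. grid_time k t - t) \<longlonglongrightarrow> 0"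
    by (intro Lim_null_comparison[OF _ lim] always_eventually) blast
  thus ?thesis by (rule LIM_zero_cancel)
qed

end

text \<open>Where the sequence diverges (a null set) \<open>lim\<close> returns an unspecified value.\<close>

definition v1 :: "(real^2) \<times> real \<Rightarrow> real^2" where
  "v1 x = lim (\<lambda>k. Fstep (layers k) x)"

definition v2 :: "(real^2) \<times> real \<Rightarrow> real^2" where
  "v2 x = zero_ext (cyl \<Omega> L) v x - v1 x"

lemma v1_measurable: "v1 \<in> borel_measurable lborel"
  unfolding v1_def[abs_def]
  using Fstep_L2[OF layers_ge_1] square_integrable_measurable by (intro borel_measurable_lim_metric) blast

lemma v1_slice: "t \<in> {0<..<L} \<Longrightarrow> v1 (y, t) = lim (\<lambda>k. Fseq k t y)"
  and v1_vanish: "t \<notin> {0<..<L} \<Longrightarrow> v1 (y, t) = 0"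
  by (simp_all add: v1_def Fstep_slice[OF layers_ge_1] Fstep_vanish Fseq_def limI)

lemma v2_slice: "t \<in> {0<..<L} \<Longrightarrow> v2 (y, t) = slice t y - v1 (y, t)"
  and v2_vanish: "t \<notin> {0<..<L} \<Longrightarrow> v2 (y, t) = 0"
  by (simp_all add: v2_def slice_def zero_ext_def cyl_def indicator_def v1_vanish)

lemma v1_outside: "x \<notin> cyl \<Omega> L \<Longrightarrow> v1 x = 0"
proof (cases x)
  case (Pair y t)
  assume "x \<notin> cyl \<Omega> L"
  thus ?thesis
    using v1_vanish[of t y] v1_slice[of t y]
    by (cases "t \<in> {0<..<L}") (simp_all add: Pair cyl_def Fseq_def Fpart_def limI)
qed

context
  fixes t assumes t: "t \<in> {0<..<L}"
begin

lemma Fseq_v1_dist: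
  shows "square_integrable lborel (\<lambda>y. Fseq j t y - v1 (y, t))"
    and "L2_sqnorm lborel (\<lambda>y. Fseq j t y - v1 (y, t)) \<le> tol j"
proof -
  have "AE y in lborel. convergent (\<lambda>k. Fseq k t y)"
  proof (rule AE_convergent_of_L2_fast_Cauchy[OF Fseq_L2[OF t]])
    show "\<Omega> \<in> sets lborel" "emeasure lborel \<Omega> < \<infinity>"
      using open_\<Omega> bounded_\<Omega> emeasure_bounded_finite by auto
    show "Fseq k t y = 0" if "y \<notin> \<Omega>" for k y using that by (simp add: Fseq_def Fpart_def)
    show "L2_sqnorm lborel (\<lambda>y. Fseq (Suc k) t y - Fseq k t y) \<le> (1/4)^k" for k
      using Fseq_Cauchy[OF t, of k "Suc k"] by (simp add: L2_sqnorm_diff_commute tol_def)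
  qed
  hence "AE y in lborel. (\<lambda>k. Fseq k t y) \<longlonglongrightarrow> v1 (y, t)"
    by eventually_elim (simp add: v1_slice[OF t] convergent_LIMSEQ_iff)
  from L2_sqnorm_diff_limit_le[of lborel "Fseq j t" "\<lambda>k. Fseq k t" "\<lambda>y. v1 (y, t)" j "tol j",
      OF Fseq_L2[OF t] Fseq_L2[OF t] borel_measurable_slice[OF v1_measurable] _ this]
  show "square_integrable lborel (\<lambda>y. Fseq j t y - v1 (y, t))"
    and "L2_sqnorm lborel (\<lambda>y. Fseq j t y - v1 (y, t)) \<le> tol j"
    using Fseq_Cauchy[OF t] by blast+
qed

lemma v1_slice_L2: "square_integrable lborel (\<lambda>y. v1 (y, t))"
  using square_integrable_diff[OF Fseq_L2[OF t] Fseq_v1_dist(1), of 0 0] by simp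

lemma v2_slice_L2: "square_integrable lborel (\<lambda>y. v2 (y, t))"
  using square_integrable_diff[OF slice_L2(1) v1_slice_L2] t by (simp add: v2_slice)

lemma v1_slice_limit: "(\<lambda>k. L2_sqnorm lborel (\<lambda>y. v1 (y, t) - Fseq k t y)) \<longlonglongrightarrow> 0"
proof (rule tendsto_sandwich[OF _ _ tendsto_const])
  show "\<forall>\<^sub>F k in sequentially. 0 \<le> L2_sqnorm lborel (\<lambda>y. v1 (y, t) - Fseq k t y)"
    by (simp add: L2_sqnorm_nonneg)
  have "L2_sqnorm lborel (\<lambda>y. v1 (y, t) - Fseq k t y) \<le> tol k" for k
    using Fseq_v1_dist(2)[of k] L2_sqnorm_diff_commute[of lborel "Fseq k t" "\<lambda>y. v1 (y, t)"] by simp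
  thus "\<forall>\<^sub>F k in sequentially. L2_sqnorm lborel (\<lambda>y. v1 (y, t) - Fseq k t y) \<le> tol k" by simp
  show "tol \<longlonglongrightarrow> 0" unfolding tol_def[abs_def] by (rule LIMSEQ_realpow_zero) simp_all
qed

lemma v2_Gpart_dist:
  assumes N: "1 \<le> N" "n < N"
  shows "L2_sqnorm lborel (\<lambda>y. v2 (y, t) - Gpart N n y) \<le>
    2 * L2_sqnorm lborel (\<lambda>y. slice t y - slice (layer_start L N n) y) +
    2 * L2_sqnorm lborel (\<lambda>y. v1 (y, t) - Fpart N n y)"
proof -
  let ?ds = "\<lambda>y. slice t y - slice (layer_start L N n) y" and ?d1 = "\<lambda>y. v1 (y, t) - Fpart N n y"
  have ds: "square_integrable lborel ?ds"
    using t layer_start_in[OF N] by (intro square_integrable_diff slice_L2) simp_all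
  have d1: "square_integrable lborel ?d1" by (rule square_integrable_diff[OF v1_slice_L2 Fpart_L2[OF N]])
  have "AE y in lborel. v2 (y, t) - Gpart N n y = ?ds y - ?d1 y"
    using Fpart_plus_Gpart[OF N] by eventually_elim (simp add: v2_slice[OF t] algebra_simps)
  hence "L2_sqnorm lborel (\<lambda>y. v2 (y, t) - Gpart N n y) = L2_sqnorm lborel (\<lambda>y. ?ds y - ?d1 y)"
    by (intro L2_sqnorm_cong_AE square_integrable_measurable
        square_integrable_diff[OF v2_slice_L2 Gpart_L2[OF N]] square_integrable_diff[OF ds d1])
  thus ?thesis using L2_sqnorm_diff_le[OF ds d1] by simp
qed

lemma v2_slice_limit: "(\<lambda>k. L2_sqnorm lborel (\<lambda>y. v2 (y, t) - Gseq k t y)) \<longlonglongrightarrow> 0"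
proof (rule tendsto_sandwich[OF _ _ tendsto_const])
  let ?bound = "\<lambda>k. 2 * L2_sqnorm lborel (\<lambda>y. slice t y - slice (grid_time k t) y) +
    2 * L2_sqnorm lborel (\<lambda>y. v1 (y, t) - Fseq k t y)"
  have "?bound \<longlonglongrightarrow> 2 * 0 + 2 * 0"
    using t grid_time(1)[OF t] grid_time_tendsto[OF t]
    by (intro tendsto_intros slice_tendsto v1_slice_limit) simp_all
  thus "?bound \<longlonglongrightarrow> 0" by simp
  show "\<forall>\<^sub>F k in sequentially. L2_sqnorm lborel (\<lambda>y. v2 (y, t) - Gseq k t y) \<le> ?bound k"
    unfolding Gseq_def Fseq_def grid_time_def
    using v2_Gpart_dist[OF layers_ge_1 layer_index_layers[OF t]] by simp
qed (simp add: L2_sqnorm_nonneg)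

end

lemma Fseq_in_Fspace: "t \<in> {0<..<L} \<Longrightarrow> \<exists>a\<in>Fspace \<Omega>. Fseq k t = zero_ext \<Omega> a"
  and Gseq_in_Gspace: "t \<in> {0<..<L} \<Longrightarrow> \<exists>b\<in>Gspace \<Omega>. Gseq k t = zero_ext \<Omega> b"
  using decomposition[OF layers_ge_1 layer_index_layers] by (auto simp: Fseq_def Gseq_def Fpart_def Gpart_def)

context
  fixes t assumes t: "t \<in> {0<..<L}"
begin

lemma v1_slice_orthogonal_Gspace:
  assumes b: "b \<in> Gspace \<Omega>"
  shows "L2_ip lborel (\<lambda>y. v1 (y, t)) (zero_ext \<Omega> b) = 0"
proof (rule L2_ip_eq_0_of_approx[OF _ Fseq_L2[OF t] v1_slice_L2[OF t] v1_slice_limit[OF t]])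
  show "square_integrable lborel (zero_ext \<Omega> b)"
    using b unfolding Gspace_def L2_iff_square_integrable by blast
  show "L2_ip lborel (Fseq k t) (zero_ext \<Omega> b) = 0" for k
    using Fseq_in_Fspace[OF t] Fspace_orthogonal_Gspace[OF open_\<Omega> bounded_\<Omega> _ b] by metis
qed

lemma Fspace_orthogonal_v2_slice:
  assumes a: "a \<in> Fspace \<Omega>"
  shows "L2_ip lborel (zero_ext \<Omega> a) (\<lambda>y. v2 (y, t)) = 0"
proof (subst L2_ip_commute, rule L2_ip_eq_0_of_approx[OF _ Gseq_L2[OF t] v2_slice_L2[OF t] v2_slice_limit[OF t]])
  show "square_integrable lborel (zero_ext \<Omega> a)"
    using a unfolding Fspace_def L2_iff_square_integrable by blast
  show "L2_ip lborel (Gseq k t) (zero_ext \<Omega> a) = 0" for k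
    using Gseq_in_Gspace[OF t] Fspace_orthogonal_Gspace[OF open_\<Omega> bounded_\<Omega> a]
    by (metis L2_ip_commute)
qed

lemma v1_v2_slice_orthogonal: "L2_ip lborel (\<lambda>y. v1 (y, t)) (\<lambda>y. v2 (y, t)) = 0"
  using Fseq_in_Fspace[OF t] Gseq_in_Gspace[OF t] Fspace_orthogonal_Gspace[OF open_\<Omega> bounded_\<Omega>]
  by (intro L2_ip_eq_0_of_limits[OF Fseq_L2[OF t] v1_slice_L2[OF t] Gseq_L2[OF t] v2_slice_L2[OF t]
        v1_slice_limit[OF t] v2_slice_limit[OF t]]) metis

end

lemma v1_L2: "square_integrable lborel v1"
proof (rule square_integrable_by_slices[OF v1_measurable v1_vanish])
  fix t assume t: "t \<in> {0<..<L}"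
  have "L2_sqnorm lborel (\<lambda>y. Fseq 0 t y - (Fseq 0 t y - v1 (y, t)))
      \<le> 2 * L2_sqnorm lborel (Fseq 0 t) + 2 * L2_sqnorm lborel (\<lambda>y. Fseq 0 t y - v1 (y, t))"
    by (rule L2_sqnorm_diff_le[OF Fseq_L2[OF t] Fseq_v1_dist(1)[OF t]])
  also have "\<dots> \<le> 2 * (v_bound\<^sup>2 * measure lborel \<Omega>) + 2 * 1"
    using Fpart_Gpart_L2_bound(1)[OF layers_ge_1 layer_index_layers[OF t, of 0]]
      Fseq_v1_dist(2)[OF t, of 0]
    by (simp add: Fseq_def tol_def)
  finally show "square_integrable lborel (\<lambda>y. v1 (y, t)) \<and>
      L2_sqnorm lborel (\<lambda>y. v1 (y, t)) \<le> 2 * (v_bound\<^sup>2 * measure lborel \<Omega>) + 2 * 1"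
    using v1_slice_L2[OF t] by simp
qed

lemma v_cyl_L2: "square_integrable lborel (zero_ext (cyl \<Omega> L) v)"
proof (rule square_integrable_zero_ext_bounded(1))
  have sub: "cyl \<Omega> L \<subseteq> closure \<Omega> \<times> {0..L}" unfolding cyl_def using closure_subset by auto
  show "open (cyl \<Omega> L)" "bounded (cyl \<Omega> L)"
    unfolding cyl_def using open_\<Omega> bounded_\<Omega> by (simp_all add: open_Times bounded_Times)
  show "continuous_on (cyl \<Omega> L) v" using continuous_on_subset[OF v_continuous sub] .
  show "norm (v x) \<le> v_bound" if "x \<in> cyl \<Omega> L" for x using that sub norm_v_le_v_bound by blast
qed

lemma v2_L2: "square_integrable lborel v2"
  unfolding v2_def[abs_def] by (rule square_integrable_diff[OF v_cyl_L2 v1_L2])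

lemma zero_ext_v1: "zero_ext (cyl \<Omega> L) v1 = v1"
  and zero_ext_v2: "zero_ext (cyl \<Omega> L) v2 = v2"
  by (auto simp: fun_eq_iff zero_ext_def indicator_def v2_def v1_outside)

lemma v1_orthogonal_v2: "L2_ip lborel v1 v2 = 0"
proof (rule L2_ip_eq_0_by_slices[OF v1_L2 v2_L2])
  show "L2_ip lborel (\<lambda>y. v1 (y, t)) (\<lambda>y. v2 (y, t)) = 0" for t
    using v1_v2_slice_orthogonal[of t] v1_vanish[of t] by (cases "t \<in> {0<..<L}") (simp_all add: L2_ip_def)
qed

context
  fixes N :: nat assumes N: "N \<ge> 1"
begin

lemma Fstep_orthogonal_v2: "L2_ip lborel (Fstep N) v2 = 0"
proof (rule L2_ip_eq_0_by_slices[OF Fstep_L2[OF N] v2_L2])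
  fix t show "L2_ip lborel (\<lambda>y. Fstep N (y, t)) (\<lambda>y. v2 (y, t)) = 0"
  proof (cases "t \<in> {0<..<L}")
    case True
    thus ?thesis
      using Fspace_orthogonal_v2_slice[OF True] decomposition[OF N layer_index(1)[OF L_pos N True]]
      by (simp add: Fstep_slice[OF N] Fpart_def)
  qed (simp add: Fstep_vanish L2_ip_def)
qed

lemma v1_orthogonal_Gstep: "L2_ip lborel v1 (Gstep N) = 0"
proof (rule L2_ip_eq_0_by_slices[OF v1_L2 Gstep_L2[OF N]])
  fix t show "L2_ip lborel (\<lambda>y. v1 (y, t)) (\<lambda>y. Gstep N (y, t)) = 0"
  proof (cases "t \<in> {0<..<L}")
    case True
    thus ?thesis
      using v1_slice_orthogonal_Gspace[OF True] decomposition[OF N layer_index(1)[OF L_pos N True]]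
      by (simp add: Gstep_slice[OF N] Gpart_def)
  qed (simp add: Gstep_vanish L2_ip_def)
qed

end

lemma fine_layers_exist:
  assumes "e > 0" "d > 0"
  shows "\<exists>j. tol j \<le> e \<and> L / real (layers j) < d"
proof -
  obtain M where M: "\<And>N. N \<ge> M \<Longrightarrow> L / real N < d"
    using eventually_mesh_less[of d L] assms(2) unfolding eventually_sequentially by auto
  obtain M' where M': "\<And>j. j \<ge> M' \<Longrightarrow> tol j < e"
    using order_tendstoD(2)[OF LIMSEQ_realpow_zero[of "1/4"], of e] assms(1)
    unfolding eventually_sequentially tol_def[abs_def] by auto
  have "tol (max M M') \<le> e" "L / real (layers (max M M')) < d"
    using M'[of "max M M'"] M[of "layers (max M M')"] layers_ge[of "max M M'"] by simp_all
  thus ?thesis by blast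
qed

text \<open>Uniform in the slice: compare the \<open>F\<close>-part on a fine grid with the \<open>F\<close>-part of one fixed
  grid of the subsequence, whose distance to \<open>v1\<close> is already below the tolerance.\<close>

lemma Fpart_v1_uniform:
  assumes e: "e > 0"
  shows "\<forall>\<^sub>F N in sequentially. N \<ge> 1 \<and> (\<forall>t\<in>{0<..<L}.
    L2_sqnorm lborel (\<lambda>y. v1 (y, t) - Fpart N (layer_index L N t) y) \<le> e \<and>
    L2_sqnorm lborel (\<lambda>y. slice t y - slice (layer_start L N (layer_index L N t)) y) \<le> e)"
proof -
  define \<delta> where "\<delta> = modulus (e / 4)"
  have \<delta>: "\<delta> > 0" using modulus(1) e by (simp add: \<delta>_def)
  obtain M where M: "\<And>N. N \<ge> M \<Longrightarrow> L / real N < \<delta> / 2"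
    using eventually_mesh_less[of "\<delta> / 2" L] \<delta> unfolding eventually_sequentially by auto
  obtain j where j: "tol j \<le> e / 4" "L / real (layers j) < \<delta> / 2"
    using fine_layers_exist[of "e / 4" "\<delta> / 2"] e \<delta> by auto
  have "N \<ge> 1 \<and> (\<forall>t\<in>{0<..<L}.
      L2_sqnorm lborel (\<lambda>y. v1 (y, t) - Fpart N (layer_index L N t) y) \<le> e \<and>
      L2_sqnorm lborel (\<lambda>y. slice t y - slice (layer_start L N (layer_index L N t)) y) \<le> e)"
    if N: "N \<ge> max 1 M" for N
  proof (intro conjI ballI)
    show N1: "N \<ge> 1" using N by simp
    fix t assume t: "t \<in> {0<..<L}"
    define n where "n = layer_index L N t"
    have n: "n < N" unfolding n_def by (rule layer_index(1)[OF L_pos N1 t])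
    define \<tau> where "\<tau> = layer_start L N n"
    have \<tau>_in: "\<tau> \<in> {0..L}" unfolding \<tau>_def by (rule layer_start_in[OF N1 n])
    have "\<bar>t - \<tau>\<bar> < L / real N" using layer_index(2)[OF L_pos N1 t] by (simp add: \<tau>_def n_def)
    also have "\<dots> < \<delta> / 2" using M[of N] N by simp
    finally have \<tau>_close: "\<bar>t - \<tau>\<bar> < \<delta> / 2" .
    note \<tau> = \<tau>_in \<tau>_close
    have "\<bar>grid_time j t - \<tau>\<bar> < \<delta>" using \<tau>(2) grid_time(2)[OF t, of j] j(2) by linarith
    hence "L2_sqnorm lborel (\<lambda>y. slice (grid_time j t) y - slice \<tau> y) \<le> e / 4"
      using modulus(2)[of "e / 4"] e \<tau>(1) grid_time(1)[OF t] by (simp add: \<delta>_def)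
    hence close: "L2_sqnorm lborel (\<lambda>y. Fseq j t y - Fpart N n y) \<le> e / 4"
      using Fpart_dist_le[OF layers_ge_1 layer_index_layers[OF t, of j] N1 n]
      unfolding Fseq_def grid_time_def \<tau>_def by linarith
    have "L2_sqnorm lborel (\<lambda>y. (Fseq j t y - Fpart N n y) - (Fseq j t y - v1 (y, t)))
        \<le> 2 * (e / 4) + 2 * tol j"
      using L2_sqnorm_diff_le[OF square_integrable_diff[OF Fseq_L2[OF t, of j] Fpart_L2[OF N1 n]]
          Fseq_v1_dist(1)[OF t, of j]] close Fseq_v1_dist(2)[OF t, of j] by linarith
    thus "L2_sqnorm lborel (\<lambda>y. v1 (y, t) - Fpart N (layer_index L N t) y) \<le> e"
      using j(1) by (simp add: n_def)
    show "L2_sqnorm lborel (\<lambda>y. slice t y - slice (layer_start L N (layer_index L N t)) y) \<le> e"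
      using modulus(2)[of "e / 4" t \<tau>] e t \<tau> \<delta>(1) by (simp add: \<delta>_def \<tau>_def n_def)
  qed
  thus ?thesis unfolding eventually_sequentially by blast
qed

lemma Fstep_tendsto: "(\<lambda>N. L2_dist_sq (cyl \<Omega> L) (step_fun L N (v1n N)) v1) \<longlonglongrightarrow> 0"
  unfolding L2_dist_sq_eq_L2_sqnorm zero_ext_v1 Fstep_def[symmetric]
proof (rule L2_sqnorm_tendsto_0_by_slices[of L])
  fix e :: real assume e: "e > 0"
  show "\<forall>\<^sub>F N in sequentially. square_integrable lborel (\<lambda>x. Fstep N x - v1 x) \<and>
      (\<forall>t\<in>{0<..<L}. L2_sqnorm lborel (\<lambda>y. Fstep N (y, t) - v1 (y, t)) \<le> e)"
    using Fpart_v1_uniform[OF e]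
  proof eventually_elim
    case (elim N)
    hence N: "N \<ge> 1" by simp
    have "L2_sqnorm lborel (\<lambda>y. Fstep N (y, t) - v1 (y, t)) \<le> e" if t: "t \<in> {0<..<L}" for t
      using elim t by (simp add: Fstep_slice[OF N t] L2_sqnorm_diff_commute[of _ "Fpart _ _"])
    thus ?case using square_integrable_diff[OF Fstep_L2[OF N] v1_L2] by blast
  qed
qed (use L_pos in \<open>simp_all add: Fstep_vanish v1_vanish\<close>)

lemma Gstep_tendsto: "(\<lambda>N. L2_dist_sq (cyl \<Omega> L) (step_fun L N (v2n N)) v2) \<longlonglongrightarrow> 0"
  unfolding L2_dist_sq_eq_L2_sqnorm zero_ext_v2 Gstep_def[symmetric]
proof (rule L2_sqnorm_tendsto_0_by_slices[of L])
  fix e :: real assume e: "e > 0"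
  have "e / 4 > 0" using e by simp
  from Fpart_v1_uniform[OF this]
  show "\<forall>\<^sub>F N in sequentially. square_integrable lborel (\<lambda>x. Gstep N x - v2 x) \<and>
      (\<forall>t\<in>{0<..<L}. L2_sqnorm lborel (\<lambda>y. Gstep N (y, t) - v2 (y, t)) \<le> e)"
  proof eventually_elim
    case (elim N)
    hence N: "N \<ge> 1" by simp
    have "L2_sqnorm lborel (\<lambda>y. Gstep N (y, t) - v2 (y, t)) \<le> e" if t: "t \<in> {0<..<L}" for t
    proof -
      have "L2_sqnorm lborel (\<lambda>y. v1 (y, t) - Fpart N (layer_index L N t) y) \<le> e / 4"
        "L2_sqnorm lborel (\<lambda>y. slice t y - slice (layer_start L N (layer_index L N t)) y) \<le> e / 4"
        using elim t by auto
      thus ?thesis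
        using v2_Gpart_dist[OF t N layer_index(1)[OF L_pos N t]]
        by (simp add: Gstep_slice[OF N t] L2_sqnorm_diff_commute[of _ "Gpart _ _"])
    qed
    thus ?case using square_integrable_diff[OF Gstep_L2[OF N] v2_L2] by blast
  qed
qed (use L_pos in \<open>simp_all add: Gstep_vanish v2_vanish\<close>)


theorem layer_decompositions_converge:
  "\<exists>v1 v2. L2 (cyl \<Omega> L) v1 \<and> L2 (cyl \<Omega> L) v2 \<and>
     (AE x in lborel. x \<in> cyl \<Omega> L \<longrightarrow> v1 x + v2 x = v x) \<and>
     (\<lambda>N. L2_dist_sq (cyl \<Omega> L) (step_fun L N (v1n N)) v1) \<longlonglongrightarrow> 0 \<and>
     (\<lambda>N. L2_dist_sq (cyl \<Omega> L) (step_fun L N (v2n N)) v2) \<longlonglongrightarrow> 0 \<and>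
     L2_inner (cyl \<Omega> L) v1 v2 = 0 \<and>
     (\<forall>N\<ge>1. L2_inner (cyl \<Omega> L) (step_fun L N (v1n N)) v2 = 0 \<and>
             L2_inner (cyl \<Omega> L) v1 (step_fun L N (v2n N)) = 0)"
proof (intro exI conjI allI impI)
  show "L2 (cyl \<Omega> L) v1" "L2 (cyl \<Omega> L) v2"
    unfolding L2_iff_square_integrable zero_ext_v1 zero_ext_v2 by (rule v1_L2, rule v2_L2)
  show "AE x in lborel. x \<in> cyl \<Omega> L \<longrightarrow> v1 x + v2 x = v x" by (simp add: v2_def)
  show "(\<lambda>N. L2_dist_sq (cyl \<Omega> L) (step_fun L N (v1n N)) v1) \<longlonglongrightarrow> 0" by (rule Fstep_tendsto)
  show "(\<lambda>N. L2_dist_sq (cyl \<Omega> L) (step_fun L N (v2n N)) v2) \<longlonglongrightarrow> 0" by (rule Gstep_tendsto)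
  show "L2_inner (cyl \<Omega> L) v1 v2 = 0"
    unfolding L2_inner_eq_L2_ip zero_ext_v1 zero_ext_v2 by (rule v1_orthogonal_v2)
  fix N :: nat assume "N \<ge> 1"
  thus "L2_inner (cyl \<Omega> L) (step_fun L N (v1n N)) v2 = 0"
    and "L2_inner (cyl \<Omega> L) v1 (step_fun L N (v2n N)) = 0"
    unfolding L2_inner_eq_L2_ip zero_ext_v1 zero_ext_v2 Fstep_def[symmetric] Gstep_def[symmetric]
    by (rule Fstep_orthogonal_v2, rule v1_orthogonal_Gstep)
qed

end

lemma smooth_on_closure_continuous:
  assumes "smooth_on_closure S f"
  shows "continuous_on (closure S) f"
proof -
  obtain U w where "open U" "closure S \<subseteq> U" "smooth_on U w" and w: "\<And>x. x \<in> closure S \<Longrightarrow> w x = f x"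
    using assms unfolding smooth_on_closure_def by blast
  hence "continuous_on U w" unfolding smooth_on_def by (metis Ck_on.simps(1))
  hence "continuous_on (closure S) w" using \<open>closure S \<subseteq> U\<close> by (rule continuous_on_subset)
  moreover have "continuous_on (closure S) w = continuous_on (closure S) f"
    by (rule continuous_on_cong[OF refl w])
  ultimately show ?thesis by simp
qed

theorem lemma4p2:
  fixes \<Omega> :: "(real^2) set" and L :: real
    and v :: "(real^2) \<times> real \<Rightarrow> real^2"
    and v1n v2n :: "nat \<Rightarrow> nat \<Rightarrow> real^2 \<Rightarrow> real^2"
  assumes dom: "smooth_bounded_domain \<Omega>" and sc: "simply_connected \<Omega>"
    and L: "L > 0"
    and vV: "v \<in> Vspace (cyl \<Omega> L)"
    and vsmooth: "smooth_on_closure (cyl \<Omega> L) v"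
    and dec: "\<And>N n. 1 \<le> N \<Longrightarrow> n < N \<Longrightarrow>
        v1n N n \<in> Fspace \<Omega> \<and> v2n N n \<in> Gspace \<Omega> \<and>
        (AE y in lborel. y \<in> \<Omega> \<longrightarrow> v1n N n y + v2n N n y = v (y, real n * (L / real N)))"
  shows "\<exists>v1 v2. L2 (cyl \<Omega> L) v1 \<and> L2 (cyl \<Omega> L) v2 \<and>
           (AE x in lborel. x \<in> cyl \<Omega> L \<longrightarrow> v1 x + v2 x = v x) \<and>
           (\<lambda>N. L2_dist_sq (cyl \<Omega> L) (step_fun L N (v1n N)) v1) \<longlonglongrightarrow> 0 \<and>
           (\<lambda>N. L2_dist_sq (cyl \<Omega> L) (step_fun L N (v2n N)) v2) \<longlonglongrightarrow> 0 \<and>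
           L2_inner (cyl \<Omega> L) v1 v2 = 0 \<and>
           (\<forall>N\<ge>1. L2_inner (cyl \<Omega> L) (step_fun L N (v1n N)) v2 = 0 \<and>
                   L2_inner (cyl \<Omega> L) v1 (step_fun L N (v2n N)) = 0)"
proof -
  have "closure (cyl \<Omega> L) = closure \<Omega> \<times> {0..L}"
    unfolding cyl_def closure_Times using L by simp
  hence "continuous_on (closure \<Omega> \<times> {0..L}) v"
    using smooth_on_closure_continuous[OF vsmooth] by simp
  moreover have "open \<Omega>" "bounded \<Omega>" using dom unfolding smooth_bounded_domain_def by auto
  ultimately have "layered_helmholtz \<Omega> L v v1n v2n"
    using L dec by unfold_locales auto
  thus ?thesis by (rule layered_helmholtz.layer_decompositions_converge)
qed

end
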